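(* Let $a_i,b_i,a'_i,b'_i\ge 0$ ($i=1,2$), $v_1=(a'_1-a_1,b'_1-b_1)$, $v_2=(a'_2-a_2,b'_2-b_2)$, with $-1<\frac{b'_1-b_1}{a'_1-a_1}<0$ and $\frac{b'_2-b_2}{a'_2-a_2}<-1$, and fix $\epsilon\in(0,1)$. Let $A$ be the intersection point of $x^{a'_1-a_1}y^{b'_1-b_1}=\epsilon^2$ and $x^{a'_2-a_2}y^{b'_2-b_2}=\epsilon^{-2}$, and $D$ the intersection point of $x^{a'_1-a_1}y^{b'_1-b_1}=\epsilon^2$ and $x^{a'_2-a_2}y^{b'_2-b_2}=\epsilon^{2}$. Let $\mathbf{x}(t)$ be the solution with $\mathbf{x}(0)=D$ of $$\begin{pmatrix}\dot x\\ \dot y\end{pmatrix}=\big(\epsilon x^{a_1}y^{b_1}-\tfrac1\epsilon x^{a'_1}y^{b'_1}\big)v_1+\big(\tfrac1\epsilon x^{a_2}y^{b_2}-\epsilon x^{a'_2}y^{b'_2}\big)v_2,$$ which converges to $A$, and let $J$ be the Jacobian matrix of this vector field at $A$. Then $\mathbf{x}(t)$ approaches $A$ along the slower eigendirection of $J$, i.e. the eigendirection corresponding to the eigenvalue of smaller magnitude.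
   Context: This is the mass-action system of the network $a_1X+b_1Y\rightleftharpoons a'_1X+b'_1Y$, $a_2X+b_2Y\rightleftharpoons a'_2X+b'_2Y$ with constant rate constants $k_1=\epsilon,k_2=1/\epsilon,k_3=1/\epsilon,k_4=\epsilon$, for which $A$ is the detailed balanced positive equilibrium. *)

theory Defs
  imports "HOL-Analysis.Analysis"
begin

text \<open>Mass-action vector field of the network
  a1 X + b1 Y <-> a1' X + b1' Y (rates eps, 1/eps),
  a2 X + b2 Y <-> a2' X + b2' Y (rates 1/eps, eps),
  on the positive quadrant; points are pairs (x, y).\<close>

definition mass_action_field ::
  "real \<Rightarrow> real \<Rightarrow> real \<Rightarrow> real \<Rightarrow> real \<Rightarrow> real \<Rightarrow> real \<Rightarrow> real \<Rightarrow> real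
   \<Rightarrow> real \<times> real \<Rightarrow> real \<times> real" where
  "mass_action_field a1 b1 a1' b1' a2 b2 a2' b2' \<epsilon> p =
     (let x = fst p; y = snd p;
          r1 = \<epsilon> * x powr a1 * y powr b1 - (1/\<epsilon>) * x powr a1' * y powr b1';
          r2 = (1/\<epsilon>) * x powr a2 * y powr b2 - \<epsilon> * x powr a2' * y powr b2'
      in (r1 * (a1' - a1) + r2 * (a2' - a2), r1 * (b1' - b1) + r2 * (b2' - b2)))"

end

theory Submission
  imports Defs "HOL-Real_Asymp.Real_Asymp"
begin

(* Write the field as rate1 v1 + rate2 v2, where rate_i is the forward rate of reaction i times
   (1 - exp log_ratio_i) and log_ratio_i is affine in (ln x, ln y).  The slope conditions give
   sigma * gram p v1 v2 > 0 for the Hessian gram of the entropy, which makes the wedge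
   {sigma * log_ratio1 >= 0, log_ratio2 <= 0} (vertex A, straight in logarithmic coordinates)
   forward invariant; D lies on its boundary.  Inside the wedge the trajectory stays in a compact
   box of the open quadrant, and the relative entropy is a strict Lyapunov function, so X tends
   to A.  The linearisation at A is h |-> - kappa1 gram A v1 h v1 - kappa2 gram A v2 h v2, with
   eigenvalues - lam_fast < - lam_slow < 0.  Near A the wedge lies in a cone around the slow
   eigenvector avoiding the fast one, and a trajectory of a perturbed linear node that stays in
   such a cone leaves along the slow eigenvector. *)

section \<open>Differential inequalities on a half-line\<close>

lemma DERIV_within_nonpos_imp_decreasing:
  fixes g g' :: "real \<Rightarrow> real"
  assumes deriv: "\<And>t. t \<ge> a \<Longrightarrow> (g has_real_derivative g' t) (at t within {a..})"
    and nonpos: "\<And>t. s \<le> t \<Longrightarrow> t \<le> s' \<Longrightarrow> g' t \<le> 0"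
    and "a \<le> s" "s \<le> s'"
  shows "g s' \<le> g s"
proof (rule DERIV_nonpos_imp_decreasing_open[of s s' g])
  have "continuous_on {a..} g"
    using deriv by (intro DERIV_continuous_on) auto
  then show "continuous_on {s..s'} g"
    by (rule continuous_on_subset) (use \<open>a \<le> s\<close> in auto)
  fix t assume t: "s < t" "t < s'"
  then have "at t within {a..} = at t"
    using \<open>a \<le> s\<close> by (intro at_within_interior) auto
  then show "\<exists>y. (g has_real_derivative y) (at t) \<and> y \<le> 0"
    using deriv[of t] nonpos[of t] t \<open>a \<le> s\<close> by auto
qed fact

lemma linear_decay_upper_bound:
  fixes q err :: "real \<Rightarrow> real"
  assumes "\<gamma> > 0"
    and deriv: "\<And>t. t \<ge> a \<Longrightarrow> (q has_real_derivative (- \<gamma> * q t + err t)) (at t within {a..})"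
    and err: "\<And>t. t \<ge> a \<Longrightarrow> err t \<le> c" and "t \<ge> a"
  shows "q t - c / \<gamma> \<le> exp (- \<gamma> * (t - a)) * (q a - c / \<gamma>)"
proof -
  define h where "h s = exp (\<gamma> * s) * (q s - c / \<gamma>)" for s
  have "h t \<le> h a"
  proof (rule DERIV_within_nonpos_imp_decreasing[where g = h and s = a and s' = t and
        g' = "\<lambda>s. exp (\<gamma> * s) * (err s - c)"])
    fix s assume "s \<ge> a"
    note deriv_s = deriv[OF this]
    show "(h has_real_derivative exp (\<gamma> * s) * (err s - c)) (at s within {a..})"
      unfolding h_def using \<open>\<gamma> > 0\<close>
      by (auto intro!: derivative_eq_intros deriv_s simp: field_simps)
  next
    fix s assume "a \<le> s"
    then show "exp (\<gamma> * s) * (err s - c) \<le> 0"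
      using err[of s] by (simp add: mult_nonneg_nonpos)
  qed (use \<open>t \<ge> a\<close> in auto)
  moreover have "exp (- \<gamma> * t) * h s = exp (- \<gamma> * (t - s)) * (q s - c / \<gamma>)" for s
    unfolding h_def by (simp add: mult.assoc[symmetric] exp_add[symmetric] right_diff_distrib)
  ultimately show ?thesis
    using mult_left_mono[of "h t" "h a" "exp (- \<gamma> * t)"] by simp
qed

lemma tendsto_zero_of_linear_decay:
  fixes q err :: "real \<Rightarrow> real"
  assumes "\<gamma> > 0"
    and deriv: "\<And>t. t \<ge> a \<Longrightarrow> (q has_real_derivative (- \<gamma> * q t + err t)) (at t within {a..})"
    and err: "(err \<longlongrightarrow> 0) at_top"
  shows "(q \<longlongrightarrow> 0) at_top"
proof (rule tendstoI)
  fix \<theta> :: real assume "\<theta> > 0"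
  have "eventually (\<lambda>t. \<bar>err t\<bar> \<le> \<gamma> * \<theta> / 4) at_top"
    using tendstoD[OF err, of "\<gamma> * \<theta> / 4"] \<open>\<gamma> > 0\<close> \<open>\<theta> > 0\<close>
    by (auto elim: eventually_mono)
  then obtain T where "T \<ge> a" and T: "\<And>t. t \<ge> T \<Longrightarrow> \<bar>err t\<bar> \<le> \<gamma> * \<theta> / 4"
    unfolding eventually_at_top_linorder by (metis linorder_le_cases order.trans)
  have deriv_T: "\<And>t. t \<ge> T \<Longrightarrow>
      (q has_real_derivative (- \<gamma> * q t + err t)) (at t within {T..})"
    using \<open>T \<ge> a\<close> by (intro DERIV_subset[OF deriv]) auto
  have bound: "\<bar>q t\<bar> \<le> \<theta> / 4 + exp (- \<gamma> * (t - T)) * \<bar>q T\<bar>" if "t \<ge> T" for t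
  proof -
    define e where "e = exp (- \<gamma> * (t - T))"
    have "e > 0" by (simp add: e_def)
    have deriv_neg: "((\<lambda>t. - q t) has_real_derivative (- \<gamma> * (- q s) + - err s)) (at s within {T..})"
      if "s \<ge> T" for s
      using DERIV_minus[OF deriv_T[OF that]] by simp
    have "err s \<le> \<gamma> * \<theta> / 4" "- err s \<le> \<gamma> * \<theta> / 4" if "s \<ge> T" for s
      using T[OF that] by (simp_all add: abs_le_iff)
    then have "q t - \<theta> / 4 \<le> e * (q T - \<theta> / 4)"
      and "- q t - \<theta> / 4 \<le> e * (- q T - \<theta> / 4)"
      using linear_decay_upper_bound[OF \<open>\<gamma> > 0\<close> deriv_T _ that, of "\<gamma> * \<theta> / 4"]
        linear_decay_upper_bound[OF \<open>\<gamma> > 0\<close> deriv_neg _ that, of "\<gamma> * \<theta> / 4"] \<open>\<gamma> > 0\<close>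
      by (simp_all add: e_def)
    moreover have "e * q T \<le> e * \<bar>q T\<bar>" "e * (- q T) \<le> e * \<bar>q T\<bar>" "0 \<le> e * (\<theta> / 4)"
      using \<open>e > 0\<close> \<open>\<theta> > 0\<close> by (intro mult_left_mono mult_nonneg_nonneg; simp)+
    ultimately have "\<bar>q t\<bar> \<le> \<theta> / 4 + e * \<bar>q T\<bar>"
      unfolding abs_le_iff right_diff_distrib by linarith
    then show ?thesis
      by (simp add: e_def)
  qed
  have "((\<lambda>t. exp (- \<gamma> * (t - T)) * \<bar>q T\<bar>) \<longlongrightarrow> 0) at_top"
    using \<open>\<gamma> > 0\<close> by real_asymp
  then have "eventually (\<lambda>t. exp (- \<gamma> * (t - T)) * \<bar>q T\<bar> < \<theta> / 2) at_top"
    using \<open>\<theta> > 0\<close> by (intro order_tendstoD) auto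
  then show "eventually (\<lambda>t. dist (q t) 0 < \<theta>) at_top"
    using eventually_ge_at_top[of T]
  proof eventually_elim
    case (elim t)
    then show ?case
      using bound[of t] \<open>\<theta> > 0\<close> by simp
  qed
qed

lemma eventually_at_right_pos_of_deriv:
  fixes g :: "real \<Rightarrow> real"
  assumes deriv: "(g has_real_derivative l) (at T within {a..})" and "a \<le> T"
    and "g T \<ge> 0" and "g T = 0 \<Longrightarrow> l > 0"
  shows "eventually (\<lambda>t. g t > 0) (at_right T)"
proof -
  have at_right_le: "at_right T \<le> at T within {a..}"
    using \<open>a \<le> T\<close> by (intro at_le) auto
  show ?thesis
  proof (cases "g T = 0")
    case False
    have "(g \<longlongrightarrow> g T) (at T within {a..})"
      using DERIV_continuous[OF deriv] by (simp add: continuous_within)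
    then have "eventually (\<lambda>t. g t > 0) (at T within {a..})"
      using False \<open>g T \<ge> 0\<close> by (intro order_tendstoD) auto
    then show ?thesis
      using at_right_le by (rule filter_leD[rotated])
  next
    case True
    have "((\<lambda>t. (g t - g T) / (t - T)) \<longlongrightarrow> l) (at T within {a..})"
      using deriv by (simp add: has_field_derivative_iff)
    then have "eventually (\<lambda>t. (g t - g T) / (t - T) > 0) (at T within {a..})"
      using True \<open>g T = 0 \<Longrightarrow> l > 0\<close> by (intro order_tendstoD) auto
    then have "eventually (\<lambda>t. (g t - g T) / (t - T) > 0) (at_right T)"
      using at_right_le by (rule filter_leD[rotated])
    then show ?thesis
      using eventually_at_right_less[of T]
      by eventually_elim (use True in \<open>auto simp: zero_less_divide_iff\<close>)
  qed
qed

lemma nonneg_by_left_continuity: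
  fixes f :: "real \<Rightarrow> real"
  assumes "continuous (at T within {a..}) f" and "a < T"
    and "\<And>t. a \<le> t \<Longrightarrow> t < T \<Longrightarrow> f t \<ge> 0"
  shows "f T \<ge> 0"
proof -
  have "(f \<longlongrightarrow> f T) (at T within {a..})"
    using assms(1) by (simp add: continuous_within)
  then have "(f \<longlongrightarrow> f T) (at T within {a..T})"
    by (rule tendsto_within_subset) auto
  then have "(f \<longlongrightarrow> f T) (at_left T)"
    using at_within_Icc_at_left[OF \<open>a < T\<close>] by simp
  moreover have "eventually (\<lambda>t. f t \<ge> 0) (at_left T)"
    using eventually_at_left_real[OF \<open>a < T\<close>] by eventually_elim (use assms(3) in auto)
  ultimately show ?thesis
    using tendsto_lowerbound trivial_limit_at_left_real by blast
qed

text \<open>At the first exit time both functions are still nonnegative, and each one vanishing there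
  becomes positive immediately afterwards.\<close>

lemma nonneg_pair_forward_invariant:
  fixes f g f' g' :: "real \<Rightarrow> real"
  assumes f: "\<And>t. t \<ge> 0 \<Longrightarrow> (f has_real_derivative f' t) (at t within {0..})"
    and g: "\<And>t. t \<ge> 0 \<Longrightarrow> (g has_real_derivative g' t) (at t within {0..})"
    and "f 0 \<ge> 0" "g 0 \<ge> 0"
    and f_exit: "\<And>t. t \<ge> 0 \<Longrightarrow> f t = 0 \<Longrightarrow> g t \<ge> 0 \<Longrightarrow> f' t > 0"
    and g_exit: "\<And>t. t \<ge> 0 \<Longrightarrow> g t = 0 \<Longrightarrow> f t \<ge> 0 \<Longrightarrow> g' t > 0"
    and "t \<ge> 0"
  shows "f t \<ge> 0 \<and> g t \<ge> 0"
proof (rule ccontr)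
  define E where "E = {t. t \<ge> 0 \<and> \<not> (f t \<ge> 0 \<and> g t \<ge> 0)}"
  assume "\<not> (f t \<ge> 0 \<and> g t \<ge> 0)"
  then have "E \<noteq> {}"
    using \<open>t \<ge> 0\<close> by (auto simp: E_def)
  have "bdd_below E"
    by (rule bdd_belowI[of _ 0]) (auto simp: E_def)
  define T where "T = Inf E"
  have "T \<ge> 0"
    unfolding T_def using \<open>E \<noteq> {}\<close> by (intro cInf_greatest) (auto simp: E_def)
  have before: "f s \<ge> 0 \<and> g s \<ge> 0" if "0 \<le> s" "s < T" for s
    using cInf_lower[OF _ \<open>bdd_below E\<close>, of s] that by (force simp: E_def T_def)
  have at_T: "f T \<ge> 0 \<and> g T \<ge> 0"
  proof (cases "T = 0")
    case True
    then show ?thesis using \<open>f 0 \<ge> 0\<close> \<open>g 0 \<ge> 0\<close> by simp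
  next
    case False
    then have "T > 0" using \<open>T \<ge> 0\<close> by simp
    then show ?thesis
      using before DERIV_continuous[OF f[OF \<open>T \<ge> 0\<close>]] DERIV_continuous[OF g[OF \<open>T \<ge> 0\<close>]]
      by (auto intro: nonneg_by_left_continuity)
  qed
  have "eventually (\<lambda>s. f s > 0) (at_right T)" "eventually (\<lambda>s. g s > 0) (at_right T)"
    using at_T f_exit g_exit \<open>T \<ge> 0\<close>
    by (auto intro!: eventually_at_right_pos_of_deriv[OF f] eventually_at_right_pos_of_deriv[OF g])
  then have "eventually (\<lambda>s. f s > 0 \<and> g s > 0) (at_right T)"
    by eventually_elim simp
  then obtain b where "b > T" and after: "\<And>s. T < s \<Longrightarrow> s < b \<Longrightarrow> f s > 0 \<and> g s > 0"
    unfolding eventually_at_right_field by blast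
  then obtain e where "e \<in> E" "e < b"
    using cInf_less_iff[OF \<open>E \<noteq> {}\<close> \<open>bdd_below E\<close>] unfolding T_def by blast
  moreover have "T \<le> e"
    unfolding T_def using \<open>e \<in> E\<close> \<open>bdd_below E\<close> by (rule cInf_lower)
  ultimately show False
    using at_T after[of e] by (cases "e = T") (auto simp: E_def)
qed

section \<open>Trajectories near an equilibrium\<close>

lemma has_derivative_linear_bound_at_zero:
  fixes F :: "'a::real_normed_vector \<Rightarrow> 'b::real_normed_vector"
  assumes "(F has_derivative F') (at A)" and "F A = 0"
  obtains L r where "L > 0" "r > 0" "\<And>p. norm (p - A) < r \<Longrightarrow> norm (F p) \<le> L * norm (p - A)"
proof -
  obtain K where "K > 0" and K: "\<And>h. norm (F' h) \<le> norm h * K"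
    using bounded_linear.pos_bounded[OF has_derivative_bounded_linear[OF assms(1)]] by blast
  obtain r where "r > 0"
    and r: "\<And>p. norm (p - A) < r \<Longrightarrow> norm (F p - F A - F' (p - A)) \<le> 1 * norm (p - A)"
    using assms(1) unfolding has_derivative_at_alt by (meson zero_less_one)
  have "norm (F p) \<le> (K + 1) * norm (p - A)" if "norm (p - A) < r" for p
  proof -
    have "norm (F p) \<le> norm (F p - F' (p - A)) + norm (F' (p - A))"
      using norm_triangle_sub[of "F p" "F' (p - A)"] by simp
    also have "\<dots> \<le> norm (p - A) + norm (p - A) * K"
      using r[OF that] K[of "p - A"] \<open>F A = 0\<close> by simp
    finally show ?thesis by (simp add: algebra_simps)
  qed
  then show ?thesis
    using that[of "K + 1" r] \<open>K > 0\<close> \<open>r > 0\<close> by simp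
qed

lemma has_real_derivative_inner_self:
  fixes X :: "real \<Rightarrow> 'a::real_inner"
  assumes "(X has_vector_derivative v) (at t within S)"
  shows "((\<lambda>s. inner (X s - c) (X s - c)) has_real_derivative 2 * inner (X t - c) v)
    (at t within S)"
proof -
  have "((\<lambda>s. X s - c) has_derivative (\<lambda>h. h *\<^sub>R v)) (at t within S)"
    using assms by (auto intro!: derivative_eq_intros simp: has_vector_derivative_def)
  from has_derivative_inner[OF this this]
  have "((\<lambda>s. inner (X s - c) (X s - c)) has_derivative
      (\<lambda>h. inner (X t - c) (h *\<^sub>R v) + inner (h *\<^sub>R v) (X t - c))) (at t within S)" .
  moreover have "(\<lambda>h. inner (X t - c) (h *\<^sub>R v) + inner (h *\<^sub>R v) (X t - c)) =
      (\<lambda>h. 2 * inner (X t - c) v * h)"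
    by (auto simp: fun_eq_iff inner_commute)
  ultimately show ?thesis
    by (simp add: has_field_derivative_def)
qed

lemma has_real_derivative_comp_vector:
  fixes X :: "real \<Rightarrow> 'a::real_normed_vector" and g :: "'a \<Rightarrow> real"
  assumes "(X has_vector_derivative v) (at t within S)" and "(g has_derivative g') (at (X t))"
  shows "((\<lambda>s. g (X s)) has_real_derivative g' v) (at t within S)"
proof -
  have "((g \<circ> X) has_derivative (g' \<circ> (\<lambda>h. h *\<^sub>R v))) (at t within S)"
    using assms(1) has_derivative_at_withinI[OF assms(2)]
    by (intro diff_chain_within) (auto simp: has_vector_derivative_def)
  moreover have "g' \<circ> (\<lambda>h. h *\<^sub>R v) = (\<lambda>h. g' v * h)"
    using linear_scale[OF has_derivative_linear[OF assms(2)]] by (auto simp: fun_eq_iff)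
  ultimately show ?thesis
    by (simp add: has_field_derivative_def comp_def)
qed

text \<open>Backward uniqueness at an equilibrium: where \<open>\<parallel>F (X s)\<parallel> \<le> L \<parallel>X s - A\<parallel>\<close>, the function
  \<open>exp (2 L s) \<parallel>X s - A\<parallel>\<^sup>2\<close> is nondecreasing, so it vanishes before any time at which it vanishes.\<close>

lemma equilibrium_reached_earlier:
  fixes X :: "real \<Rightarrow> 'a::real_inner"
  assumes ode: "\<And>t. t \<ge> 0 \<Longrightarrow> (X has_vector_derivative F (X t)) (at t within {0..})"
    and bound: "\<And>s. s0 \<le> s \<Longrightarrow> s \<le> T \<Longrightarrow> norm (F (X s)) \<le> L * norm (X s - A)"
    and "0 \<le> s0" "s0 \<le> T" "X T = A"
  shows "X s0 = A"
proof -
  define n where "n s = inner (X s - A) (X s - A)" for s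
  define N where "N s = exp (2 * L * s) * n s" for s
  have "(\<lambda>s. - N s) T \<le> (\<lambda>s. - N s) s0"
  proof (rule DERIV_within_nonpos_imp_decreasing[where a = 0 and s = s0 and s' = T and
        g' = "\<lambda>s. - (exp (2 * L * s) * (2 * L) * n s
                    + 2 * inner (X s - A) (F (X s)) * exp (2 * L * s))"])
    fix s :: real assume "s \<ge> 0"
    have e: "((\<lambda>s. exp (2 * L * s)) has_real_derivative exp (2 * L * s) * (2 * L))
        (at s within {0..})"
      by (auto intro!: derivative_eq_intros)
    have d: "(n has_real_derivative 2 * inner (X s - A) (F (X s))) (at s within {0..})"
      unfolding n_def by (rule has_real_derivative_inner_self[OF ode[OF \<open>s \<ge> 0\<close>]])
    show "((\<lambda>s. - N s) has_real_derivative
        - (exp (2 * L * s) * (2 * L) * n s + 2 * inner (X s - A) (F (X s)) * exp (2 * L * s)))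
        (at s within {0..})"
      unfolding N_def by (rule DERIV_minus[OF DERIV_mult[OF e d]])
  next
    fix s assume "s0 \<le> s" "s \<le> T"
    have "\<bar>inner (X s - A) (F (X s))\<bar> \<le> norm (X s - A) * norm (F (X s))"
      by (rule Cauchy_Schwarz_ineq2)
    also have "\<dots> \<le> norm (X s - A) * (L * norm (X s - A))"
      using bound[OF \<open>s0 \<le> s\<close> \<open>s \<le> T\<close>] by (rule mult_left_mono) simp
    finally have "\<bar>inner (X s - A) (F (X s))\<bar> \<le> L * n s"
      by (simp add: n_def power2_norm_eq_inner[symmetric] power2_eq_square algebra_simps)
    then have "0 \<le> (2 * L * n s + 2 * inner (X s - A) (F (X s))) * exp (2 * L * s)"
      by (intro mult_nonneg_nonneg) (simp_all add: abs_le_iff)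
    then show "- (exp (2 * L * s) * (2 * L) * n s
        + 2 * inner (X s - A) (F (X s)) * exp (2 * L * s)) \<le> 0"
      by (simp only: ring_distribs mult_ac)
  qed (use assms(3,4) in auto)
  then have "n s0 \<le> 0"
    using \<open>X T = A\<close> by (simp add: N_def n_def mult_le_0_iff)
  then show "X s0 = A"
    unfolding n_def by (metis eq_iff_diff_eq_0 inner_gt_zero_iff not_le)
qed

lemma trajectory_never_reaches_equilibrium:
  fixes X :: "real \<Rightarrow> 'a::real_inner"
  assumes ode: "\<And>t. t \<ge> 0 \<Longrightarrow> (X has_vector_derivative F (X t)) (at t within {0..})"
    and "(F has_derivative F') (at A)" and "F A = 0" and "X 0 \<noteq> A" and "t \<ge> 0"
  shows "X t \<noteq> A"
proof
  assume "X t = A"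
  obtain L r where "r > 0"
    and L: "\<And>p. norm (p - A) < r \<Longrightarrow> norm (F p) \<le> L * norm (p - A)"
    using has_derivative_linear_bound_at_zero[OF assms(2,3)] by blast
  have cont: "continuous_on {0..} X"
    using has_vector_derivative_continuous[OF ode]
    by (simp add: continuous_on_eq_continuous_within)
  define S where "S = {0..} \<inter> X -` {A}"
  have "closed S"
    unfolding S_def by (rule continuous_closed_preimage[OF cont]) auto
  have "S \<noteq> {}" "bdd_below S"
    using \<open>X t = A\<close> \<open>t \<ge> 0\<close> by (auto simp: S_def intro: bdd_belowI[of _ 0])
  define T where "T = Inf S"
  have "T \<in> S"
    unfolding T_def by (rule closed_contains_Inf[OF \<open>S \<noteq> {}\<close> \<open>bdd_below S\<close> \<open>closed S\<close>])
  then have "T \<ge> 0" "X T = A"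
    by (auto simp: S_def)
  with \<open>X 0 \<noteq> A\<close> have "T > 0"
    by (cases "T = 0") auto
  have "(X \<longlongrightarrow> A) (at T within {0..})"
    using cont \<open>T \<ge> 0\<close> \<open>X T = A\<close> by (metis atLeast_iff continuous_on_def)
  then have "eventually (\<lambda>s. dist (X s) A < r) (at T within {0..})"
    using \<open>r > 0\<close> by (rule tendstoD)
  then obtain \<delta> where "\<delta> > 0" and \<delta>: "\<And>s. s \<ge> 0 \<Longrightarrow> s \<noteq> T \<Longrightarrow> dist s T < \<delta> \<Longrightarrow> dist (X s) A < r"
    unfolding eventually_at by auto
  define s0 where "s0 = max (T - \<delta> / 2) (T / 2)"
  have s0: "0 \<le> s0" "s0 < T" "T - s0 < \<delta>"
    using \<open>T > 0\<close> \<open>\<delta> > 0\<close> by (auto simp: s0_def)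
  have near: "norm (F (X s)) \<le> L * norm (X s - A)" if "s0 \<le> s" "s \<le> T" for s
  proof (cases "s = T")
    case True
    then show ?thesis
      using \<open>X T = A\<close> \<open>F A = 0\<close> by simp
  next
    case False
    moreover have "dist s T < \<delta>" "s \<ge> 0"
      using that s0 by (simp_all add: dist_real_def)
    ultimately have "norm (X s - A) < r"
      using \<delta>[of s] by (simp add: dist_norm)
    then show ?thesis
      by (rule L)
  qed
  have "X s0 = A"
    using equilibrium_reached_earlier[OF ode near] s0 \<open>X T = A\<close> by fastforce
  then have "s0 \<in> S"
    using s0 by (simp add: S_def)
  then show False
    using cInf_lower[OF _ \<open>bdd_below S\<close>, of s0] s0 by (simp add: T_def)
qed

lemma norm_diff_le_of_bounded_field:
  fixes X :: "real \<Rightarrow> 'a::real_normed_vector"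
  assumes ode: "\<And>t. t \<ge> 0 \<Longrightarrow> (X has_vector_derivative F (X t)) (at t within {0..})"
    and bound: "\<And>t. t \<ge> 0 \<Longrightarrow> norm (F (X t)) \<le> B" and "0 \<le> t" "t \<le> s"
  shows "norm (X s - X t) \<le> B * (s - t)"
proof (cases "t = s")
  case False
  with \<open>t \<le> s\<close> have "t < s" by simp
  have "norm (X s - X t) \<le> B * s - B * t"
  proof (rule differentiable_bound_general[OF \<open>t < s\<close>, where f' = "\<lambda>x. F (X x)" and \<phi>' = "\<lambda>_. B"])
    have "continuous_on {0..} X"
      using has_vector_derivative_continuous[OF ode]
      by (simp add: continuous_on_eq_continuous_within)
    then show "continuous_on {t..s} X"
      by (rule continuous_on_subset) (use \<open>0 \<le> t\<close> in auto)
    fix x assume x: "t < x" "x < s"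
    have "at x within {0..} = at x"
      using x \<open>0 \<le> t\<close> by (intro at_within_interior) auto
    then show "(X has_vector_derivative F (X x)) (at x)"
      using ode[of x] x \<open>0 \<le> t\<close> by simp
    show "((\<lambda>x. B * x) has_vector_derivative B) (at x)"
      using has_real_derivative_iff_has_vector_derivative DERIV_cmult_Id by blast
    show "norm (F (X x)) \<le> B"
      using bound x \<open>0 \<le> t\<close> by simp
  qed (intro continuous_intros)
  then show ?thesis
    by (simp add: algebra_simps)
qed simp

lemma lyapunov_drop:
  assumes V_deriv: "\<And>t. t \<ge> 0 \<Longrightarrow> ((\<lambda>t. V (X t)) has_real_derivative - W (X t)) (at t within {0..})"
    and W: "\<And>s. t1 \<le> s \<Longrightarrow> s \<le> t1 + h \<Longrightarrow> W (X s) \<ge> w0" and "0 \<le> t1" "0 \<le> h"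
  shows "V (X (t1 + h)) \<le> V (X t1) - w0 * h"
proof -
  have "V (X (t1 + h)) + w0 * (t1 + h) \<le> V (X t1) + w0 * t1"
  proof (rule DERIV_within_nonpos_imp_decreasing[where a = 0 and g = "\<lambda>s. V (X s) + w0 * s"
        and g' = "\<lambda>s. - W (X s) + w0"])
    fix s :: real assume "s \<ge> 0"
    then show "((\<lambda>s. V (X s) + w0 * s) has_real_derivative - W (X s) + w0) (at s within {0..})"
      using DERIV_add[OF V_deriv DERIV_cmult_Id[of w0]] by simp
  next
    fix s assume "t1 \<le> s" "s \<le> t1 + h"
    then show "- W (X s) + w0 \<le> 0"
      using W by simp
  qed (use assms(3,4) in auto)
  then show ?thesis
    by (simp add: algebra_simps)
qed

text \<open>LaSalle-type argument: \<open>V \<circ> X\<close> decreases and is bounded below on the compact set \<open>K\<close>;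
  every visit far from \<open>A\<close> lasts a fixed time (the speed is bounded on \<open>K\<close>) and costs a fixed
  amount of \<open>V\<close>, so there can only be finitely many.\<close>

lemma lyapunov_convergence:
  fixes X :: "real \<Rightarrow> 'a::real_normed_vector"
  assumes ode: "\<And>t. t \<ge> 0 \<Longrightarrow> (X has_vector_derivative F (X t)) (at t within {0..})"
    and "compact K" and in_K: "\<And>t. t \<ge> 0 \<Longrightarrow> X t \<in> K"
    and "continuous_on K F" "continuous_on K V" "continuous_on K W"
    and V_deriv: "\<And>t. t \<ge> 0 \<Longrightarrow> ((\<lambda>t. V (X t)) has_real_derivative - W (X t)) (at t within {0..})"
    and W_nonneg: "\<And>p. p \<in> K \<Longrightarrow> W p \<ge> 0"
    and W_pos: "\<And>p. p \<in> K \<Longrightarrow> p \<noteq> A \<Longrightarrow> W p > 0"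
  shows "(X \<longlongrightarrow> A) at_top"
proof (rule ccontr)
  assume "\<not> (X \<longlongrightarrow> A) at_top"
  then obtain \<delta> where "\<delta> > 0" and far: "\<And>T. \<exists>t\<ge>T. dist (X t) A \<ge> \<delta>"
    unfolding tendsto_iff eventually_at_top_linorder by (meson not_le)
  define K' where "K' = K \<inter> {p. dist p A \<ge> \<delta> / 2}"
  have "compact K'"
    unfolding K'_def by (intro compact_Int_closed \<open>compact K\<close> closed_Collect_le continuous_intros)
  obtain t0 where "t0 \<ge> 0" "dist (X t0) A \<ge> \<delta>"
    using far[of 0] by blast
  then have "K' \<noteq> {}"
    using in_K[of t0] \<open>\<delta> > 0\<close> by (auto simp: K'_def)
  then obtain p0 where "p0 \<in> K'" and p0: "\<And>p. p \<in> K' \<Longrightarrow> W p0 \<le> W p"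
    using continuous_attains_inf[OF \<open>compact K'\<close> _ continuous_on_subset[OF \<open>continuous_on K W\<close>]]
    by (auto simp: K'_def)
  define w0 where "w0 = W p0"
  have "p0 \<in> K" "p0 \<noteq> A"
    using \<open>p0 \<in> K'\<close> \<open>\<delta> > 0\<close> by (auto simp: K'_def)
  then have "w0 > 0"
    unfolding w0_def by (rule W_pos)
  have "bounded (F ` K)"
    by (intro compact_imp_bounded compact_continuous_image \<open>continuous_on K F\<close> \<open>compact K\<close>)
  then obtain B where "B > 0" and B: "\<And>p. p \<in> K \<Longrightarrow> norm (F p) \<le> B"
    unfolding bounded_pos by blast
  obtain p1 where p1: "\<And>p. p \<in> K \<Longrightarrow> V p1 \<le> V p"
    using continuous_attains_inf[OF \<open>compact K\<close> _ \<open>continuous_on K V\<close>] in_K[of 0] by blast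
  define G where "G = (\<lambda>t. V (X t)) ` {0..}"
  have "bdd_below G" "G \<noteq> {}"
    unfolding G_def using p1 in_K by (auto intro!: bdd_belowI[of _ "V p1"])
  have V_decr: "V (X t') \<le> V (X t)" if "0 \<le> t" "t \<le> t'" for t t'
    by (rule DERIV_within_nonpos_imp_decreasing[OF V_deriv]) (use that W_nonneg in_K in auto)
  define h where "h = \<delta> / (2 * B)"
  have "h > 0"
    using \<open>\<delta> > 0\<close> \<open>B > 0\<close> by (simp add: h_def)
  obtain T0 where "T0 \<ge> 0" and T0: "V (X T0) < Inf G + w0 * h"
    using cInf_less_iff[OF \<open>G \<noteq> {}\<close> \<open>bdd_below G\<close>, of "Inf G + w0 * h"] \<open>w0 > 0\<close> \<open>h > 0\<close>
    by (auto simp: G_def)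
  obtain t1 where "t1 \<ge> T0" and t1: "dist (X t1) A \<ge> \<delta>"
    using far by blast
  have stays_far: "X s \<in> K'" if "t1 \<le> s" "s \<le> t1 + h" for s
  proof -
    have "norm (X s - X t1) \<le> B * (s - t1)"
      using norm_diff_le_of_bounded_field[OF ode _ _ that(1), of B] B in_K \<open>t1 \<ge> T0\<close> \<open>T0 \<ge> 0\<close>
      by simp
    also have "\<dots> \<le> B * h"
      using that \<open>B > 0\<close> by (intro mult_left_mono) auto
    also have "B * h = \<delta> / 2"
      using \<open>B > 0\<close> by (simp add: h_def)
    finally have "dist (X s) A \<ge> \<delta> / 2"
      using t1 dist_triangle[of "X t1" A "X s"] by (simp add: dist_norm norm_minus_commute)
    then show ?thesis
      using in_K[of s] that \<open>t1 \<ge> T0\<close> \<open>T0 \<ge> 0\<close> by (simp add: K'_def)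
  qed
  have "V (X (t1 + h)) \<le> V (X t1) - w0 * h"
    using p0[OF stays_far] \<open>t1 \<ge> T0\<close> \<open>T0 \<ge> 0\<close> \<open>h > 0\<close>
    by (intro lyapunov_drop[where V = V and W = W and X = X, OF V_deriv]) (auto simp: w0_def)
  moreover have "V (X t1) \<le> V (X T0)"
    using V_decr \<open>T0 \<ge> 0\<close> \<open>t1 \<ge> T0\<close> by simp
  moreover have "Inf G \<le> V (X (t1 + h))"
    unfolding G_def using \<open>bdd_below G\<close> \<open>h > 0\<close> \<open>t1 \<ge> T0\<close> \<open>T0 \<ge> 0\<close>
    by (intro cInf_lower) (auto simp: G_def)
  ultimately show False
    using T0 by simp
qed

section \<open>Perturbed linear nodes in the plane\<close>

definition det2 :: "real \<times> real \<Rightarrow> real \<times> real \<Rightarrow> real" where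
  "det2 a b = fst a * snd b - snd a * fst b"

lemma det2_add: "det2 (a + b) c = det2 a c + det2 b c" "det2 a (b + c) = det2 a b + det2 a c"
  by (simp_all add: det2_def algebra_simps)

lemma det2_scaleR: "det2 (x *\<^sub>R a) b = x * det2 a b" "det2 a (x *\<^sub>R b) = x * det2 a b"
  by (simp_all add: det2_def algebra_simps)

lemma det2_self: "det2 a a = 0"
  by (simp add: det2_def)

lemma det2_decomposition:
  assumes "det2 u w \<noteq> 0"
  shows "p = (det2 p w / det2 u w) *\<^sub>R u + (det2 u p / det2 u w) *\<^sub>R w"
proof -
  have "det2 p w *\<^sub>R u + det2 u p *\<^sub>R w = det2 u w *\<^sub>R p"
    unfolding det2_def by (simp add: prod_eq_iff algebra_simps)
  then have "(1 / det2 u w) *\<^sub>R (det2 p w *\<^sub>R u + det2 u p *\<^sub>R w) = p"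
    using assms by simp
  then show ?thesis
    by (simp add: scaleR_add_right)
qed

lemma abs_det2_le: "\<bar>det2 a b\<bar> \<le> norm a * norm b"
proof -
  have "det2 a b = inner a (snd b, - fst b)"
    by (cases a) (simp add: det2_def inner_Pair)
  moreover have "norm (snd b, - fst b) = norm b"
    by (cases b) (simp add: norm_Pair add.commute)
  ultimately show ?thesis
    using Cauchy_Schwarz_ineq2[of a "(snd b, - fst b)"] by simp
qed

lemma has_real_derivative_det2:
  assumes "(d has_vector_derivative v) F"
  shows "((\<lambda>t. det2 (d t) w) has_real_derivative det2 v w) F"
    and "((\<lambda>t. det2 w (d t)) has_real_derivative det2 w v) F"
proof -
  have "linear (\<lambda>p. det2 p w)" "linear (\<lambda>p. det2 w p)"
    by (intro linearI; simp add: det2_add det2_scaleR)+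
  then have "bounded_linear (\<lambda>p. det2 p w)" "bounded_linear (\<lambda>p. det2 w p)"
    by (simp_all add: linear_conv_bounded_linear)
  then show "((\<lambda>t. det2 (d t) w) has_real_derivative det2 v w) F"
    "((\<lambda>t. det2 w (d t)) has_real_derivative det2 w v) F"
    using bounded_linear.has_vector_derivative[OF _ assms]
    by (simp_all add: has_real_derivative_iff_has_vector_derivative)
qed

lemma det2_eigenvector_coordinates:
  assumes "linear J" "J u = \<mu> *\<^sub>R u" "J w = \<nu> *\<^sub>R w" "det2 u w \<noteq> 0"
  shows "det2 (J p) w = \<mu> * det2 p w" and "det2 u (J p) = \<nu> * det2 u p"
proof -
  define a b where "a = det2 p w / det2 u w" and "b = det2 u p / det2 u w"
  have "J p = J (a *\<^sub>R u + b *\<^sub>R w)"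
    using det2_decomposition[OF assms(4), of p] by (simp add: a_def b_def)
  also have "\<dots> = (a * \<mu>) *\<^sub>R u + (b * \<nu>) *\<^sub>R w"
    using assms(1-3) by (simp add: linear_add linear_scale)
  finally have "J p = (a * \<mu>) *\<^sub>R u + (b * \<nu>) *\<^sub>R w" .
  moreover have "det2 p w = a * det2 u w" "det2 u p = b * det2 u w"
    using assms(4) by (simp_all add: a_def b_def)
  ultimately show "det2 (J p) w = \<mu> * det2 p w" "det2 u (J p) = \<nu> * det2 u p"
    by (simp_all add: det2_add det2_scaleR det2_self)
qed

lemma has_real_derivative_eigen_coordinates:
  assumes J: "linear J" "J u = \<mu> *\<^sub>R u" "J w = \<nu> *\<^sub>R w" and "det2 u w \<noteq> 0"
    and d: "(d has_vector_derivative (J (d t) + r)) F"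
  shows "((\<lambda>t. det2 (d t) w) has_real_derivative (\<mu> * det2 (d t) w + det2 r w)) F"
    and "((\<lambda>t. det2 u (d t)) has_real_derivative (\<nu> * det2 u (d t) + det2 u r)) F"
  using has_real_derivative_det2[OF d, where w = w] has_real_derivative_det2[OF d, where w = u]
  by (simp_all add: det2_add det2_eigenvector_coordinates[OF J \<open>det2 u w \<noteq> 0\<close>])

lemma direction_tendsto_of_coordinate_ratio:
  assumes "norm u = 1" and "det2 u w \<noteq> 0"
    and pos: "eventually (\<lambda>t. det2 (d t) w / det2 u w > 0) at_top"
    and ratio: "((\<lambda>t. det2 u (d t) / det2 (d t) w) \<longlongrightarrow> 0) at_top"
  shows "((\<lambda>t. (1 / norm (d t)) *\<^sub>R d t) \<longlongrightarrow> u) at_top"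
proof -
  define q where "q t = det2 u (d t) / det2 (d t) w" for t
  have "((\<lambda>t. (1 / norm (u + q t *\<^sub>R w)) *\<^sub>R (u + q t *\<^sub>R w)) \<longlongrightarrow>
      (1 / norm (u + 0 *\<^sub>R w)) *\<^sub>R (u + 0 *\<^sub>R w)) at_top"
    using ratio \<open>norm u = 1\<close> unfolding q_def[symmetric] by (intro tendsto_intros) auto
  moreover have "eventually (\<lambda>t. (1 / norm (u + q t *\<^sub>R w)) *\<^sub>R (u + q t *\<^sub>R w) =
      (1 / norm (d t)) *\<^sub>R d t) at_top"
    using pos
  proof eventually_elim
    case (elim t)
    define f where "f = det2 (d t) w / det2 u w"
    have "d t = f *\<^sub>R u + (det2 u (d t) / det2 u w) *\<^sub>R w"
      unfolding f_def by (rule det2_decomposition[OF \<open>det2 u w \<noteq> 0\<close>])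
    also have "\<dots> = f *\<^sub>R (u + q t *\<^sub>R w)"
      using elim \<open>det2 u w \<noteq> 0\<close> by (auto simp: f_def q_def scaleR_add_right)
    finally have "d t = f *\<^sub>R (u + q t *\<^sub>R w)" .
    moreover have "f > 0"
      using elim by (simp add: f_def)
    ultimately show ?case
      by simp
  qed
  ultimately show ?thesis
    using \<open>norm u = 1\<close> by (simp add: tendsto_cong)
qed

lemma norm_ratio_tendsto_zero:
  fixes R d :: "real \<Rightarrow> 'a::real_normed_vector"
  assumes small: "\<And>e. e > 0 \<Longrightarrow> eventually (\<lambda>t. norm (R t) \<le> e * norm (d t)) at_top"
    and nonzero: "eventually (\<lambda>t. d t \<noteq> 0) at_top"
  shows "((\<lambda>t. norm (R t) / norm (d t)) \<longlongrightarrow> 0) at_top"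
proof (rule tendstoI)
  fix e :: real assume "e > 0"
  then have "e / 2 > 0"
    by simp
  from small[OF this] nonzero
  show "eventually (\<lambda>t. dist (norm (R t) / norm (d t)) 0 < e) at_top"
  proof eventually_elim
    case (elim t)
    then have "norm (d t) > 0"
      by simp
    with elim(1) \<open>e > 0\<close> have "norm (R t) < e * norm (d t)"
      using mult_pos_pos[OF \<open>e > 0\<close> \<open>norm (d t) > 0\<close>] by linarith
    with \<open>norm (d t) > 0\<close> show ?case
      by (simp add: divide_less_eq)
  qed
qed

text \<open>The ratio \<open>q\<close> of the \<open>w\<close>-coordinate to the \<open>u\<close>-coordinate of \<open>d\<close> satisfies
  \<open>q' = -(\<mu> - \<nu>) q + err\<close> with \<open>err = O(\<parallel>R\<parallel> / \<parallel>d\<parallel>)\<close>, because the cone condition keeps \<open>q\<close>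
  bounded and the \<open>u\<close>-coordinate comparable to \<open>\<parallel>d\<parallel>\<close>.\<close>

lemma coordinate_ratio_tendsto_zero:
  fixes J :: "real \<times> real \<Rightarrow> real \<times> real" and d R :: "real \<Rightarrow> real \<times> real"
  assumes J: "linear J" "J u = \<mu> *\<^sub>R u" "J w = \<nu> *\<^sub>R w" and "\<nu> < \<mu>"
    and "norm u = 1" and "det2 u w \<noteq> 0"
    and ode: "\<And>t. t \<ge> 0 \<Longrightarrow> (d has_vector_derivative (J (d t) + R t)) (at t within {0..})"
    and small: "\<And>e. e > 0 \<Longrightarrow> eventually (\<lambda>t. norm (R t) \<le> e * norm (d t)) at_top"
    and nonzero: "\<And>t. t \<ge> 0 \<Longrightarrow> d t \<noteq> 0"
    and "K > 0" and cone: "eventually (\<lambda>t. norm (d t) \<le> K * (det2 (d t) w / det2 u w)) at_top"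
  shows "((\<lambda>t. det2 u (d t) / det2 (d t) w) \<longlongrightarrow> 0) at_top"
proof -
  define \<Delta> where "\<Delta> = det2 u w"
  define f where "f t = det2 (d t) w / \<Delta>" for t
  define g where "g t = det2 u (d t) / \<Delta>" for t
  define q where "q t = g t / f t" for t
  obtain T0 where "T0 \<ge> 0" and norm_le_f: "\<And>t. t \<ge> T0 \<Longrightarrow> norm (d t) \<le> K * f t"
    using cone unfolding eventually_at_top_linorder f_def \<Delta>_def by (metis linorder_le_cases order.trans)
  have f_pos: "f t > 0" if "t \<ge> T0" for t
  proof -
    have "0 < K * f t"
      using norm_le_f[OF that] nonzero[of t] that \<open>T0 \<ge> 0\<close> zero_less_norm_iff[of "d t"] by linarith
    then show ?thesis
      using \<open>K > 0\<close> by (simp add: zero_less_mult_iff)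
  qed
  have q_bound: "\<bar>q t\<bar> \<le> K / \<bar>\<Delta>\<bar>" if "t \<ge> T0" for t
  proof -
    have "\<bar>g t\<bar> * \<bar>\<Delta>\<bar> \<le> K * f t"
      using abs_det2_le[of u "d t"] \<open>norm u = 1\<close> norm_le_f[OF that] \<open>det2 u w \<noteq> 0\<close>
      by (simp add: g_def \<Delta>_def abs_divide)
    then show ?thesis
      using f_pos[OF that] \<open>det2 u w \<noteq> 0\<close>
      by (simp add: q_def abs_divide \<Delta>_def field_simps)
  qed
  have coord_deriv:
    "(f has_real_derivative (\<mu> * f t + det2 (R t) w / \<Delta>)) (at t within {T0..})"
    "(g has_real_derivative (\<nu> * g t + det2 u (R t) / \<Delta>)) (at t within {T0..})"
    if "t \<ge> T0" for t
  proof -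
    have "(d has_vector_derivative (J (d t) + R t)) (at t within {T0..})"
      using ode[of t] that \<open>T0 \<ge> 0\<close> by (auto intro: has_vector_derivative_within_subset)
    note coords = has_real_derivative_eigen_coordinates[OF J \<open>det2 u w \<noteq> 0\<close> this]
    show "(f has_real_derivative (\<mu> * f t + det2 (R t) w / \<Delta>)) (at t within {T0..})"
      unfolding f_def[abs_def] using DERIV_cdivide[OF coords(1), where c = \<Delta>]
      by (simp add: add_divide_distrib)
    show "(g has_real_derivative (\<nu> * g t + det2 u (R t) / \<Delta>)) (at t within {T0..})"
      unfolding g_def[abs_def] using DERIV_cdivide[OF coords(2), where c = \<Delta>]
      by (simp add: add_divide_distrib)
  qed
  define err where "err t = (det2 u (R t) - q t * det2 (R t) w) / (\<Delta> * f t)" for t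
  have q_deriv: "(q has_real_derivative (- (\<mu> - \<nu>) * q t + err t)) (at t within {T0..})"
    if "t \<ge> T0" for t
  proof -
    have "f t \<noteq> 0" "\<Delta> \<noteq> 0"
      using f_pos[OF that] \<open>det2 u w \<noteq> 0\<close> by (auto simp: \<Delta>_def)
    have "(q has_real_derivative
        ((\<nu> * g t + det2 u (R t) / \<Delta>) * f t - g t * (\<mu> * f t + det2 (R t) w / \<Delta>))
          / (f t * f t)) (at t within {T0..})"
      unfolding q_def[abs_def]
      using coord_deriv(2)[OF that] coord_deriv(1)[OF that] \<open>f t \<noteq> 0\<close> by (rule DERIV_divide)
    also have "((\<nu> * g t + det2 u (R t) / \<Delta>) * f t - g t * (\<mu> * f t + det2 (R t) w / \<Delta>))
          / (f t * f t) = - (\<mu> - \<nu>) * q t + err t"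
      using \<open>f t \<noteq> 0\<close> \<open>\<Delta> \<noteq> 0\<close> by (simp add: q_def err_def field_simps)
    finally show ?thesis .
  qed
  have "eventually (\<lambda>t. d t \<noteq> 0) at_top"
    using eventually_ge_at_top[of 0] by eventually_elim (rule nonzero)
  from norm_ratio_tendsto_zero[of R d, OF small this]
  have ratio_zero: "((\<lambda>t. norm (R t) / norm (d t)) \<longlongrightarrow> 0) at_top" .
  define c where "c = 1 + K / \<bar>\<Delta>\<bar> * norm w"
  have err_bound: "norm (err t) \<le> K * c / \<bar>\<Delta>\<bar> * (norm (R t) / norm (d t))" if "t \<ge> T0" for t
  proof -
    have pos: "f t > 0" "\<bar>\<Delta>\<bar> > 0" "norm (d t) > 0" "c > 0"
      using f_pos[OF that] \<open>K > 0\<close> \<open>det2 u w \<noteq> 0\<close> nonzero[of t] that \<open>T0 \<ge> 0\<close>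
      by (auto simp: \<Delta>_def c_def intro!: add_pos_nonneg)
    have "\<bar>q t * det2 (R t) w\<bar> \<le> K / \<bar>\<Delta>\<bar> * (norm (R t) * norm w)"
      unfolding abs_mult using q_bound[OF that] abs_det2_le[of "R t" w] \<open>K > 0\<close>
      by (intro mult_mono) auto
    then have "\<bar>det2 u (R t) - q t * det2 (R t) w\<bar> \<le> norm (R t) * c"
      using abs_det2_le[of u "R t"] \<open>norm u = 1\<close> abs_triangle_ineq4[of "det2 u (R t)"]
      by (simp add: c_def algebra_simps)
    then have "norm (err t) \<le> norm (R t) * c / (\<bar>\<Delta>\<bar> * f t)"
      using pos by (simp add: err_def abs_divide abs_mult divide_right_mono)
    also have "\<dots> \<le> norm (R t) * c / (\<bar>\<Delta>\<bar> * (norm (d t) / K))"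
      using pos norm_le_f[OF that] \<open>K > 0\<close>
      by (intro divide_left_mono mult_left_mono mult_pos_pos) (auto simp: divide_le_eq mult.commute)
    also have "\<dots> = K * c / \<bar>\<Delta>\<bar> * (norm (R t) / norm (d t))"
      using pos \<open>K > 0\<close> by (simp add: field_simps)
    finally show ?thesis .
  qed
  have "((\<lambda>t. K * c / \<bar>\<Delta>\<bar> * (norm (R t) / norm (d t))) \<longlongrightarrow> 0) at_top"
    using tendsto_mult[OF tendsto_const[of "K * c / \<bar>\<Delta>\<bar>"] ratio_zero] by simp
  moreover have "eventually (\<lambda>t. norm (err t) \<le> K * c / \<bar>\<Delta>\<bar> * (norm (R t) / norm (d t))) at_top"
    using eventually_ge_at_top[of T0] by (rule eventually_mono) (rule err_bound)
  ultimately have "(err \<longlongrightarrow> 0) at_top"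
    by (rule Lim_null_comparison[rotated])
  then have "(q \<longlongrightarrow> 0) at_top"
    by (rule tendsto_zero_of_linear_decay[of "\<mu> - \<nu>" T0 q err, rotated 2])
      (use \<open>\<nu> < \<mu>\<close> q_deriv in auto)
  moreover have "q = (\<lambda>t. det2 u (d t) / det2 (d t) w)"
    using \<open>det2 u w \<noteq> 0\<close> by (simp add: fun_eq_iff q_def f_def g_def \<Delta>_def)
  ultimately show ?thesis
    by simp
qed

lemma direction_tendsto_dominant_eigenvector:
  fixes J :: "real \<times> real \<Rightarrow> real \<times> real" and d R :: "real \<Rightarrow> real \<times> real"
  assumes J: "linear J" "J u = \<mu> *\<^sub>R u" "J w = \<nu> *\<^sub>R w" and "\<nu> < \<mu>"
    and "norm u = 1" and "det2 u w \<noteq> 0"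
    and ode: "\<And>t. t \<ge> 0 \<Longrightarrow> (d has_vector_derivative (J (d t) + R t)) (at t within {0..})"
    and small: "\<And>e. e > 0 \<Longrightarrow> eventually (\<lambda>t. norm (R t) \<le> e * norm (d t)) at_top"
    and nonzero: "\<And>t. t \<ge> 0 \<Longrightarrow> d t \<noteq> 0"
    and "K > 0" and cone: "eventually (\<lambda>t. norm (d t) \<le> K * (det2 (d t) w / det2 u w)) at_top"
  shows "((\<lambda>t. (1 / norm (d t)) *\<^sub>R d t) \<longlongrightarrow> u) at_top"
proof (rule direction_tendsto_of_coordinate_ratio[OF \<open>norm u = 1\<close> \<open>det2 u w \<noteq> 0\<close>])
  show "eventually (\<lambda>t. det2 (d t) w / det2 u w > 0) at_top"
    using cone eventually_ge_at_top[of 0]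
  proof eventually_elim
    case (elim t)
    then have "0 < K * (det2 (d t) w / det2 u w)"
      using nonzero[of t] zero_less_norm_iff[of "d t"] by linarith
    then show ?case
      using \<open>K > 0\<close> by (rule zero_less_mult_pos)
  qed
  show "((\<lambda>t. det2 u (d t) / det2 (d t) w) \<longlongrightarrow> 0) at_top"
    by (rule coordinate_ratio_tendsto_zero[OF assms])
qed

section \<open>The two-reaction mass-action system\<close>

definition positive_quadrant :: "(real \<times> real) set" where
  "positive_quadrant = {p. fst p > 0 \<and> snd p > 0}"

lemma open_positive_quadrant: "open positive_quadrant"
  unfolding positive_quadrant_def by (intro open_Collect_conj open_Collect_less continuous_intros)

text \<open>The Hessian at \<open>p\<close> of the entropy \<open>x ln x + y ln y\<close>, as a bilinear form.\<close>

definition gram :: "real \<times> real \<Rightarrow> real \<times> real \<Rightarrow> real \<times> real \<Rightarrow> real" where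
  "gram p v w = fst v * fst w / fst p + snd v * snd w / snd p"

lemma gram_linear_right: "gram p v (a *\<^sub>R w + b *\<^sub>R z) = a * gram p v w + b * gram p v z"
  by (simp add: gram_def add_divide_distrib algebra_simps)

lemma gram_scaleR_right: "gram p v (c *\<^sub>R w) = c * gram p v w"
  using gram_linear_right[of p v c w 0 w] by simp

lemma gram_commute: "gram p v w = gram p w v"
  by (simp add: gram_def mult.commute)

lemma gram_pos:
  assumes "p \<in> positive_quadrant" "v \<noteq> 0"
  shows "gram p v v > 0"
proof -
  have "fst v \<noteq> 0 \<or> snd v \<noteq> 0"
    using assms(2) by (auto simp: prod_eq_iff)
  moreover have "fst v * fst v / fst p \<ge> 0" "snd v * snd v / snd p \<ge> 0"
    and "fst v \<noteq> 0 \<Longrightarrow> fst v * fst v / fst p > 0" "snd v \<noteq> 0 \<Longrightarrow> snd v * snd v / snd p > 0"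
    using assms(1) by (auto simp: positive_quadrant_def zero_less_mult_iff intro!: divide_pos_pos)
  ultimately show ?thesis
    unfolding gram_def by linarith
qed

lemma gram_det:
  "p \<in> positive_quadrant \<Longrightarrow>
    gram p v v * gram p w w - (gram p v w)\<^sup>2 = (det2 v w)\<^sup>2 / (fst p * snd p)"
  by (simp add: gram_def det2_def positive_quadrant_def field_simps power2_eq_square)

lemma gram_det2:
  "p \<in> positive_quadrant \<Longrightarrow> gram p v a * gram p w b - gram p w a * gram p v b
    = det2 v w / (fst p * snd p) * det2 a b"
  by (simp add: gram_def det2_def positive_quadrant_def field_simps)

lemma cone_inequality:
  fixes a b n \<delta> \<beta>1 \<beta>2 m C :: real
  assumes "m \<le> \<beta>1" "m \<le> \<beta>2" "m > 0" "C > 0" "n \<ge> 0" "\<delta> \<ge> 0"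
    and "a \<ge> - (\<delta> * n)" "b \<le> \<delta> * n" "n \<le> C * (\<bar>a\<bar> + \<bar>b\<bar>)"
    and "\<delta> * (2 * m + \<beta>1 + \<beta>2) \<le> m / (2 * C)"
  shows "\<beta>2 * a - \<beta>1 * b \<ge> m / (2 * C) * n"
proof -
  have "\<beta>2 * (a + \<delta> * n) \<ge> m * (a + \<delta> * n)" "\<beta>1 * (\<delta> * n - b) \<ge> m * (\<delta> * n - b)"
    using assms by (auto intro: mult_right_mono)
  moreover have "a - b + 2 * (\<delta> * n) \<ge> \<bar>a\<bar> + \<bar>b\<bar> - 2 * (\<delta> * n)"
    using assms(6,7,8) \<open>n \<ge> 0\<close> by (simp add: abs_if)
  moreover have "\<bar>a\<bar> + \<bar>b\<bar> \<ge> n / C"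
    using assms(4,9) by (simp add: divide_le_eq mult.commute)
  ultimately have "m * (a - b + 2 * (\<delta> * n)) \<ge> m * (n / C - 2 * (\<delta> * n))"
    using \<open>m > 0\<close> by (intro mult_left_mono) auto
  moreover have "\<delta> * (2 * m + \<beta>1 + \<beta>2) * n \<le> m / (2 * C) * n"
    using assms(5,10) by (rule mult_right_mono[rotated])
  moreover have "m * (n / C) - m / (2 * C) * n = m / (2 * C) * n"
    using \<open>C > 0\<close> by (simp add: field_simps)
  ultimately show ?thesis
    using \<open>\<beta>2 * (a + \<delta> * n) \<ge> m * (a + \<delta> * n)\<close> \<open>\<beta>1 * (\<delta> * n - b) \<ge> m * (\<delta> * n - b)\<close>
    by (simp add: algebra_simps)
qed

locale two_reaction_system =
  fixes a1 b1 a1' b1' a2 b2 a2' b2' \<epsilon> :: real and A :: "real \<times> real"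
  assumes slope1: "-1 < (b1' - b1) / (a1' - a1)" "(b1' - b1) / (a1' - a1) < 0"
    and slope2: "(b2' - b2) / (a2' - a2) < -1"
    and eps_pos: "\<epsilon> > 0"
    and A_pos: "fst A > 0" "snd A > 0"
    and A_eq1: "fst A powr (a1' - a1) * snd A powr (b1' - b1) = \<epsilon>^2"
    and A_eq2: "fst A powr (a2' - a2) * snd A powr (b2' - b2) = 1 / \<epsilon>^2"
begin

definition "v1 = (a1' - a1, b1' - b1)"
definition "v2 = (a2' - a2, b2' - b2)"
abbreviation "F \<equiv> mass_action_field a1 b1 a1' b1' a2 b2 a2' b2' \<epsilon>"

definition "rate1 p = \<epsilon> * fst p powr a1 * snd p powr b1 - (1/\<epsilon>) * fst p powr a1' * snd p powr b1'"
definition "rate2 p = (1/\<epsilon>) * fst p powr a2 * snd p powr b2 - \<epsilon> * fst p powr a2' * snd p powr b2'"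

text \<open>\<open>log_ratio\<^sub>i p\<close> is the logarithm of the ratio backward rate / forward rate of reaction \<open>i\<close>
  (the negative of its affinity).\<close>

definition "log_ratio1 p = (a1' - a1) * ln (fst p) + (b1' - b1) * ln (snd p) - 2 * ln \<epsilon>"
definition "log_ratio2 p = (a2' - a2) * ln (fst p) + (b2' - b2) * ln (snd p) + 2 * ln \<epsilon>"

definition "m1 = - ((b1' - b1) / (a1' - a1))"
definition "m2 = - ((b2' - b2) / (a2' - a2))"
definition "\<sigma> = sgn ((a1' - a1) * (a2' - a2))"

lemma field_eq: "F p = rate1 p *\<^sub>R v1 + rate2 p *\<^sub>R v2"
  unfolding mass_action_field_def rate1_def rate2_def v1_def v2_def Let_def by (simp add: mult.commute)

lemma A_in_quadrant: "A \<in> positive_quadrant"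
  using A_pos by (simp add: positive_quadrant_def)

lemma dx_nonzero: "a1' - a1 \<noteq> 0" "a2' - a2 \<noteq> 0"
  using slope1 slope2 by auto

lemma m_bounds: "0 < m1" "m1 < 1" "1 < m2"
  using slope1 slope2 by (auto simp: m1_def m2_def)

lemma dy_eq: "b1' - b1 = - m1 * (a1' - a1)" "b2' - b2 = - m2 * (a2' - a2)"
  using dx_nonzero by (simp_all add: m1_def m2_def)

lemma v_nonzero: "v1 \<noteq> 0" "v2 \<noteq> 0"
  using dx_nonzero by (simp_all add: v1_def v2_def zero_prod_def)

lemma det2_v_nonzero: "det2 v1 v2 \<noteq> 0"
proof -
  have "det2 v1 v2 = (a1' - a1) * (a2' - a2) * (m1 - m2)"
    by (simp add: det2_def v1_def v2_def dy_eq algebra_simps)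
  then show ?thesis
    using dx_nonzero m_bounds by simp
qed

lemma sigma_cases: "\<sigma> = 1 \<or> \<sigma> = -1"
  using dx_nonzero by (auto simp: \<sigma>_def sgn_if)

lemma sigma_sq: "\<sigma> * \<sigma> = 1"
  using dx_nonzero by (simp add: \<sigma>_def sgn_mult_self_eq del: sgn_mult)

lemma sigma_gram_pos: "p \<in> positive_quadrant \<Longrightarrow> \<sigma> * gram p v1 v2 > 0"
proof -
  assume "p \<in> positive_quadrant"
  have "gram p v1 v2 = ((a1' - a1) * (a2' - a2)) * (1 / fst p + m1 * m2 / snd p)"
    by (simp add: gram_def v1_def v2_def dy_eq field_simps)
  moreover have "1 / fst p + m1 * m2 / snd p > 0"
    using \<open>p \<in> positive_quadrant\<close> m_bounds by (intro add_pos_pos) (auto simp: positive_quadrant_def)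
  moreover have "(a1' - a1) * (a2' - a2) \<noteq> 0"
    using dx_nonzero by simp
  then have "\<sigma> * ((a1' - a1) * (a2' - a2)) > 0"
    unfolding \<sigma>_def by (metis abs_sgn mult.commute zero_less_abs_iff)
  ultimately show ?thesis
    by (simp add: mult.assoc[symmetric])
qed

lemma exp_two_ln_eps: "exp (2 * ln \<epsilon>) = \<epsilon>^2"
proof -
  have "ln (\<epsilon>^2) = 2 * ln \<epsilon>"
    using eps_pos by (simp add: ln_realpow)
  then show ?thesis
    using eps_pos by (metis exp_ln zero_less_power)
qed

lemma exp_log_ratio:
  assumes "p \<in> positive_quadrant"
  shows "exp (log_ratio1 p) = fst p powr (a1' - a1) * snd p powr (b1' - b1) / \<epsilon>^2"
    and "exp (log_ratio2 p) = fst p powr (a2' - a2) * snd p powr (b2' - b2) * \<epsilon>^2"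
  using assms exp_two_ln_eps
  by (auto simp: log_ratio1_def log_ratio2_def exp_add exp_diff powr_def positive_quadrant_def)

lemma rate_eq:
  assumes "p \<in> positive_quadrant"
  shows "rate1 p = \<epsilon> * fst p powr a1 * snd p powr b1 * (1 - exp (log_ratio1 p))"
    and "rate2 p = (1/\<epsilon>) * fst p powr a2 * snd p powr b2 * (1 - exp (log_ratio2 p))"
proof -
  have split: "x powr c' = x powr c * x powr (c' - c)" for x c c' :: real
    by (simp flip: powr_add)
  show "rate1 p = \<epsilon> * fst p powr a1 * snd p powr b1 * (1 - exp (log_ratio1 p))"
    unfolding exp_log_ratio[OF assms] rate1_def split[of _ a1' a1] split[of _ b1' b1]
    using eps_pos by (simp add: field_simps power2_eq_square)
  show "rate2 p = (1/\<epsilon>) * fst p powr a2 * snd p powr b2 * (1 - exp (log_ratio2 p))"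
    unfolding exp_log_ratio[OF assms] rate2_def split[of _ a2' a2] split[of _ b2' b2]
    using eps_pos by (simp add: field_simps power2_eq_square)
qed

lemma rate_sign:
  assumes "p \<in> positive_quadrant"
  shows "rate1 p > 0 \<longleftrightarrow> log_ratio1 p < 0" "rate1 p < 0 \<longleftrightarrow> log_ratio1 p > 0"
    and "rate2 p > 0 \<longleftrightarrow> log_ratio2 p < 0" "rate2 p < 0 \<longleftrightarrow> log_ratio2 p > 0"
    and "rate1 p = 0 \<longleftrightarrow> log_ratio1 p = 0" "rate2 p = 0 \<longleftrightarrow> log_ratio2 p = 0"
proof -
  have sign: "(c * (1 - exp s) > 0 \<longleftrightarrow> s < 0) \<and> (c * (1 - exp s) < 0 \<longleftrightarrow> s > 0)
      \<and> (c * (1 - exp s) = 0 \<longleftrightarrow> s = 0)" if "c > 0" for c s :: real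
    using that by (auto simp: zero_less_mult_iff mult_less_0_iff)
  have "\<epsilon> * fst p powr a1 * snd p powr b1 > 0" "(1/\<epsilon>) * fst p powr a2 * snd p powr b2 > 0"
    using assms eps_pos by (auto simp: positive_quadrant_def)
  note signs = sign[OF this(1), of "log_ratio1 p"] sign[OF this(2), of "log_ratio2 p"]
  show "rate1 p > 0 \<longleftrightarrow> log_ratio1 p < 0" "rate1 p < 0 \<longleftrightarrow> log_ratio1 p > 0"
    "rate2 p > 0 \<longleftrightarrow> log_ratio2 p < 0" "rate2 p < 0 \<longleftrightarrow> log_ratio2 p > 0"
    "rate1 p = 0 \<longleftrightarrow> log_ratio1 p = 0" "rate2 p = 0 \<longleftrightarrow> log_ratio2 p = 0"
    unfolding rate_eq[OF assms] using signs by blast+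
qed

lemma log_ratio_A: "log_ratio1 A = 0" "log_ratio2 A = 0"
  using exp_log_ratio[OF A_in_quadrant] A_eq1 A_eq2 eps_pos by auto

lemma field_A: "F A = 0"
  using rate_sign(5,6)[OF A_in_quadrant] log_ratio_A by (simp add: field_eq zero_prod_def)

lemma log_ratio_centered:
  "log_ratio1 p = (a1' - a1) * (ln (fst p) - ln (fst A)) + (b1' - b1) * (ln (snd p) - ln (snd A))"
  "log_ratio2 p = (a2' - a2) * (ln (fst p) - ln (fst A)) + (b2' - b2) * (ln (snd p) - ln (snd A))"
  using log_ratio_A by (simp_all add: log_ratio1_def log_ratio2_def algebra_simps)

lemma equilibrium_unique:
  assumes "p \<in> positive_quadrant" "log_ratio1 p = 0" "log_ratio2 p = 0"
  shows "p = A"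
proof -
  define L M where "L = ln (fst p) - ln (fst A)" and "M = ln (snd p) - ln (snd A)"
  have e1: "(a1' - a1) * L + (b1' - b1) * M = 0" and e2: "(a2' - a2) * L + (b2' - b2) * M = 0"
    using assms(2,3) log_ratio_centered by (simp_all add: L_def M_def)
  have "L * det2 v1 v2 = (b2' - b2) * ((a1' - a1) * L + (b1' - b1) * M)
      - (b1' - b1) * ((a2' - a2) * L + (b2' - b2) * M)"
    and "M * det2 v1 v2 = (a1' - a1) * ((a2' - a2) * L + (b2' - b2) * M)
      - (a2' - a2) * ((a1' - a1) * L + (b1' - b1) * M)"
    by (simp_all add: det2_def v1_def v2_def algebra_simps)
  then have "L * det2 v1 v2 = 0" "M * det2 v1 v2 = 0"
    unfolding e1 e2 by simp_all
  then have "L = 0" "M = 0"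
    using det2_v_nonzero by simp_all
  then show ?thesis
    using assms(1) A_pos by (simp add: L_def M_def positive_quadrant_def prod_eq_iff)
qed

lemma log_ratio_has_derivative:
  assumes "p \<in> positive_quadrant"
  shows "(log_ratio1 has_derivative gram p v1) (at p)"
    and "(log_ratio2 has_derivative gram p v2) (at p)"
  using assms unfolding log_ratio1_def[abs_def] log_ratio2_def[abs_def] gram_def[abs_def] v1_def v2_def
  by (auto intro!: derivative_eq_intros simp: positive_quadrant_def field_simps)

definition "rel_entropy p =
  fst p * (ln (fst p) - ln (fst A)) - fst p + (snd p * (ln (snd p) - ln (snd A)) - snd p)"
definition "dissipation p = - (rate1 p * log_ratio1 p + rate2 p * log_ratio2 p)"

lemma rel_entropy_decreases_along_field:
  assumes "p \<in> positive_quadrant"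
  obtains E' where "(rel_entropy has_derivative E') (at p)" "E' (F p) = - dissipation p"
proof
  show "(rel_entropy has_derivative
      (\<lambda>h. (ln (fst p) - ln (fst A)) * fst h + (ln (snd p) - ln (snd A)) * snd h)) (at p)"
    using assms unfolding rel_entropy_def[abs_def]
    by (auto intro!: derivative_eq_intros simp: positive_quadrant_def field_simps)
  show "(ln (fst p) - ln (fst A)) * fst (F p) + (ln (snd p) - ln (snd A)) * snd (F p)
      = - dissipation p"
    by (simp add: field_eq dissipation_def log_ratio_centered v1_def v2_def algebra_simps)
qed

lemma rate_log_ratio_nonpos:
  assumes "p \<in> positive_quadrant"
  shows "rate1 p * log_ratio1 p \<le> 0" "rate2 p * log_ratio2 p \<le> 0"
  using rate_sign[OF assms]
  by (cases "log_ratio1 p" "0::real" rule: linorder_cases,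
      cases "log_ratio2 p" "0::real" rule: linorder_cases; auto simp: mult_le_0_iff)+

lemma dissipation_nonneg: "p \<in> positive_quadrant \<Longrightarrow> dissipation p \<ge> 0"
  using rate_log_ratio_nonpos[of p] by (simp add: dissipation_def)

lemma dissipation_pos:
  assumes "p \<in> positive_quadrant" "p \<noteq> A"
  shows "dissipation p > 0"
proof -
  have "log_ratio1 p \<noteq> 0 \<or> log_ratio2 p \<noteq> 0"
    using equilibrium_unique[OF assms(1)] assms(2) by blast
  then have "rate1 p * log_ratio1 p < 0 \<or> rate2 p * log_ratio2 p < 0"
    using rate_sign[OF assms(1)] by (auto simp: mult_less_0_iff neq_iff)
  then show ?thesis
    using rate_log_ratio_nonpos[OF assms(1)]
    unfolding dissipation_def by linarith
qed

lemma continuous_on_quadrant: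
  "continuous_on positive_quadrant F" "continuous_on positive_quadrant rel_entropy"
  "continuous_on positive_quadrant dissipation"
proof -
  have "continuous_on positive_quadrant rate1" "continuous_on positive_quadrant rate2"
    "continuous_on positive_quadrant log_ratio1" "continuous_on positive_quadrant log_ratio2"
    unfolding rate1_def[abs_def] rate2_def[abs_def] log_ratio1_def[abs_def] log_ratio2_def[abs_def]
    using eps_pos by (auto intro!: continuous_intros simp: positive_quadrant_def)
  then show "continuous_on positive_quadrant F" "continuous_on positive_quadrant dissipation"
    unfolding field_eq[abs_def] dissipation_def[abs_def] by (auto intro!: continuous_intros)
  show "continuous_on positive_quadrant rel_entropy"
    unfolding rel_entropy_def[abs_def] by (auto intro!: continuous_intros simp: positive_quadrant_def)
qed

section \<open>Linearisation at the equilibrium\<close>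

text \<open>At the detailed balanced equilibrium \<open>A\<close> the forward and backward rates of reaction \<open>i\<close>
  agree; \<open>\<kappa>\<^sub>i\<close> is this common value.\<close>

definition "\<kappa>1 = \<epsilon> * fst A powr a1 * snd A powr b1"
definition "\<kappa>2 = (1/\<epsilon>) * fst A powr a2 * snd A powr b2"

definition "linear_part h = (- \<kappa>1 * gram A v1 h) *\<^sub>R v1 + (- \<kappa>2 * gram A v2 h) *\<^sub>R v2"

lemma kappa_pos: "\<kappa>1 > 0" "\<kappa>2 > 0"
  using eps_pos A_pos by (simp_all add: \<kappa>1_def \<kappa>2_def)

lemma rate_has_derivative_A:
  "(rate1 has_derivative (\<lambda>h. - \<kappa>1 * gram A v1 h)) (at A)"
  "(rate2 has_derivative (\<lambda>h. - \<kappa>2 * gram A v2 h)) (at A)"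
proof -
  have product_rule: "((\<lambda>p. P p * (1 - exp (lr p))) has_derivative (\<lambda>h. - P A * g' h)) (at A)"
    if "P differentiable at A" "(lr has_derivative g') (at A)" "lr A = 0"
    for P lr g' :: "real \<times> real \<Rightarrow> real"
  proof -
    obtain P' where P': "(P has_derivative P') (at A)"
      using \<open>P differentiable at A\<close> unfolding differentiable_def by blast
    have "((\<lambda>p. 1 - exp (lr p)) has_derivative (\<lambda>h. - g' h)) (at A)"
      using has_derivative_diff[OF has_derivative_const has_derivative_exp[OF that(2)]] \<open>lr A = 0\<close>
      by simp
    from has_derivative_mult[OF P' this] show ?thesis
      using \<open>lr A = 0\<close> by simp
  qed
  have "(\<lambda>p. \<epsilon> * fst p powr a1 * snd p powr b1) differentiable at A"
    "(\<lambda>p. (1/\<epsilon>) * fst p powr a2 * snd p powr b2) differentiable at A"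
    using A_pos eps_pos unfolding differentiable_def by (auto intro!: exI derivative_eq_intros)
  from product_rule[OF this(1) log_ratio_has_derivative(1)[OF A_in_quadrant] log_ratio_A(1)]
    product_rule[OF this(2) log_ratio_has_derivative(2)[OF A_in_quadrant] log_ratio_A(2)]
  show "(rate1 has_derivative (\<lambda>h. - \<kappa>1 * gram A v1 h)) (at A)"
    "(rate2 has_derivative (\<lambda>h. - \<kappa>2 * gram A v2 h)) (at A)"
    using rate_eq open_positive_quadrant A_in_quadrant
    by (auto intro: has_derivative_transform_within_open simp: \<kappa>1_def \<kappa>2_def)
qed

lemma field_has_derivative: "(F has_derivative linear_part) (at A)"
  unfolding field_eq[abs_def] linear_part_def
  by (intro has_derivative_add has_derivative_scaleR_left rate_has_derivative_A)

abbreviation "g11 \<equiv> gram A v1 v1"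
abbreviation "g12 \<equiv> gram A v1 v2"
abbreviation "g22 \<equiv> gram A v2 v2"

definition "eig_sum = \<kappa>1 * g11 + \<kappa>2 * g22"
definition "discr = (\<kappa>1 * g11 - \<kappa>2 * g22)^2 + 4 * g12^2 * \<kappa>1 * \<kappa>2"
definition "lam_slow = (eig_sum - sqrt discr) / 2"
definition "lam_fast = (eig_sum + sqrt discr) / 2"
definition "eigvec \<mu> = (\<kappa>1 * \<kappa>2 * g12) *\<^sub>R v1 + (\<kappa>2 * (\<mu> - \<kappa>1 * g11)) *\<^sub>R v2"

lemma gram_A_pos: "g11 > 0" "g22 > 0" "\<sigma> * g12 > 0" "g12 \<noteq> 0"
  using gram_pos[OF A_in_quadrant] v_nonzero sigma_gram_pos[OF A_in_quadrant] by auto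

lemma gram_A_det_pos: "g11 * g22 - g12^2 > 0"
  using gram_det[OF A_in_quadrant] det2_v_nonzero A_pos by simp

lemma eigenvalue_bounds: "0 < lam_slow" "lam_slow < \<kappa>1 * g11" "\<kappa>1 * g11 < lam_fast"
proof -
  have "4 * g12^2 * \<kappa>1 * \<kappa>2 > 0"
    using gram_A_pos kappa_pos by (auto simp: mult_pos_pos)
  then have "(\<kappa>1 * g11 - \<kappa>2 * g22)^2 < discr"
    by (simp add: discr_def)
  then have gap: "\<bar>\<kappa>1 * g11 - \<kappa>2 * g22\<bar> < sqrt discr"
    using real_sqrt_less_mono by fastforce
  have "eig_sum > 0"
    using kappa_pos gram_A_pos by (simp add: eig_sum_def add_pos_pos)
  have "discr = eig_sum^2 - 4 * (\<kappa>1 * \<kappa>2 * (g11 * g22 - g12^2))"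
    by (simp add: discr_def eig_sum_def power2_eq_square algebra_simps)
  also have "\<dots> < eig_sum^2"
    using kappa_pos gram_A_det_pos by simp
  finally have "sqrt discr < sqrt (eig_sum^2)"
    by (rule real_sqrt_less_mono)
  then have "sqrt discr < eig_sum"
    using \<open>eig_sum > 0\<close> by simp
  then show "0 < lam_slow" "lam_slow < \<kappa>1 * g11" "\<kappa>1 * g11 < lam_fast"
    using gap by (auto simp: lam_slow_def lam_fast_def eig_sum_def)
qed

lemma eigenvalue_root:
  assumes "\<mu> = lam_slow \<or> \<mu> = lam_fast"
  shows "\<mu>^2 - eig_sum * \<mu> + \<kappa>1 * \<kappa>2 * (g11 * g22 - g12^2) = 0"
proof -
  have quadratic_root: "l^2 - T * l + d = 0"
    if "s^2 = T^2 - 4 * d" "2 * l = T + s \<or> 2 * l = T - s" for s T d l :: real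
    using that by (elim disjE) algebra+
  have "discr \<ge> 0"
    using kappa_pos by (simp add: discr_def)
  then have "(sqrt discr)^2 = eig_sum^2 - 4 * (\<kappa>1 * \<kappa>2 * (g11 * g22 - g12^2))"
    by (simp add: discr_def eig_sum_def power2_eq_square algebra_simps)
  then show ?thesis
    using assms by (intro quadratic_root[of "sqrt discr"]) (auto simp: lam_slow_def lam_fast_def)
qed

lemma gram_eigvec:
  "gram A v1 (eigvec \<mu>) = \<mu> * (\<kappa>2 * g12)"
  "\<mu> = lam_slow \<or> \<mu> = lam_fast \<Longrightarrow> gram A v2 (eigvec \<mu>) = \<mu> * (\<mu> - \<kappa>1 * g11)"
proof -
  show "gram A v1 (eigvec \<mu>) = \<mu> * (\<kappa>2 * g12)"
    unfolding eigvec_def gram_linear_right by (simp add: algebra_simps)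
  assume "\<mu> = lam_slow \<or> \<mu> = lam_fast"
  have "gram A v2 (eigvec \<mu>) = \<kappa>1 * \<kappa>2 * g12^2 + \<kappa>2 * g22 * (\<mu> - \<kappa>1 * g11)"
    unfolding eigvec_def gram_linear_right gram_commute[of A v2 v1]
    by (simp add: power2_eq_square algebra_simps)
  also have "\<dots> = \<mu> * (\<mu> - \<kappa>1 * g11)"
    using eigenvalue_root[OF \<open>\<mu> = lam_slow \<or> \<mu> = lam_fast\<close>]
    by (simp add: eig_sum_def power2_eq_square algebra_simps)
  finally show "gram A v2 (eigvec \<mu>) = \<mu> * (\<mu> - \<kappa>1 * g11)" .
qed

lemma linear_part_eigvec:
  assumes "\<mu> = lam_slow \<or> \<mu> = lam_fast"
  shows "linear_part (eigvec \<mu>) = (- \<mu>) *\<^sub>R eigvec \<mu>"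
  unfolding linear_part_def gram_eigvec(1) gram_eigvec(2)[OF assms]
  by (simp add: eigvec_def scaleR_add_right algebra_simps)

lemma eigvec_nonzero: "\<mu> > 0 \<Longrightarrow> eigvec \<mu> \<noteq> 0"
  using gram_eigvec(1)[of \<mu>] gram_A_pos kappa_pos by (auto simp: gram_def)

lemma det2_eigvec: "det2 (eigvec lam_slow) (eigvec lam_fast) \<noteq> 0"
proof
  assume "det2 (eigvec lam_slow) (eigvec lam_fast) = 0"
  then have "gram A v1 (eigvec lam_slow) * gram A v2 (eigvec lam_fast)
      - gram A v2 (eigvec lam_slow) * gram A v1 (eigvec lam_fast) = 0"
    using gram_det2[OF A_in_quadrant] by simp
  then have "lam_slow * lam_fast * (\<kappa>2 * g12) * (lam_fast - lam_slow) = 0"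
    by (simp add: gram_eigvec algebra_simps)
  then show False
    using eigenvalue_bounds gram_A_pos kappa_pos by auto
qed

lemma norm_le_gram_coordinates:
  obtains C where "C > 0" "\<And>h. norm h \<le> C * (\<bar>gram A v1 h\<bar> + \<bar>gram A v2 h\<bar>)"
proof -
  define f where "f h = (gram A v1 h, gram A v2 h)" for h
  have "linear f"
    by (rule linearI) (simp_all add: f_def gram_def algebra_simps add_divide_distrib)
  moreover have "h = 0" if "f h = 0" for h
  proof -
    have "det2 v1 v2 / (fst A * snd A) * det2 h b = 0" for b
      using gram_det2[OF A_in_quadrant, of v1 h v2 b] that by (simp add: f_def zero_prod_def)
    moreover have "det2 v1 v2 / (fst A * snd A) \<noteq> 0"
      using det2_v_nonzero A_pos by simp
    ultimately have "det2 h (1, 0) = 0" "det2 h (0, 1) = 0"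
      by simp_all
    then show "h = 0"
      by (simp add: det2_def prod_eq_iff)
  qed
  ultimately have "inj f"
    by (simp add: linear_inj_iff_eq_0)
  then obtain B where "B > 0" and B: "\<And>h. B * norm h \<le> norm (f h)"
    using linear_inj_bounded_below_pos[OF \<open>linear f\<close>] by blast
  have "norm h \<le> 1 / B * (\<bar>gram A v1 h\<bar> + \<bar>gram A v2 h\<bar>)" for h
  proof -
    have "B * norm h \<le> \<bar>gram A v1 h\<bar> + \<bar>gram A v2 h\<bar>"
      using B[of h] norm_Pair_le[of "gram A v1 h" "gram A v2 h"] by (simp add: f_def)
    then show ?thesis
      using \<open>B > 0\<close> by (simp add: field_simps)
  qed
  with \<open>B > 0\<close> show ?thesis
    using that[of "1 / B"] by simp
qed

definition "slow_dir = (1 / norm (eigvec lam_slow)) *\<^sub>R eigvec lam_slow"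
definition "fast_vec = eigvec lam_fast"

lemma slow_dir_eigen: "norm slow_dir = 1" "linear_part slow_dir = (- lam_slow) *\<^sub>R slow_dir"
proof -
  have "linear linear_part"
    using has_derivative_linear[OF field_has_derivative] .
  then show "linear_part slow_dir = (- lam_slow) *\<^sub>R slow_dir"
    by (simp add: slow_dir_def linear_scale linear_part_eigvec)
  show "norm slow_dir = 1"
    using eigvec_nonzero eigenvalue_bounds by (simp add: slow_dir_def)
qed

lemma fast_vec_eigen: "fast_vec \<noteq> 0" "linear_part fast_vec = (- lam_fast) *\<^sub>R fast_vec"
  using eigvec_nonzero eigenvalue_bounds linear_part_eigvec
  by (auto simp: fast_vec_def)

lemma det2_slow_fast: "det2 slow_dir fast_vec \<noteq> 0"
  using det2_eigvec eigvec_nonzero eigenvalue_bounds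
  by (simp add: slow_dir_def fast_vec_def det2_scaleR)

text \<open>The forms \<open>gram A v\<^sub>i\<close> are the derivatives of \<open>log_ratio\<^sub>i\<close> at \<open>A\<close>: \<open>slow_dir\<close> points into the
  invariant wedge below, \<open>fast_vec\<close> does not.\<close>

lemma gram_eigvec_signs:
  "\<sigma> * gram A v1 slow_dir > 0" "gram A v2 slow_dir < 0"
  "\<sigma> * gram A v1 fast_vec > 0" "gram A v2 fast_vec > 0"
proof -
  have "norm (eigvec lam_slow) > 0"
    using eigvec_nonzero eigenvalue_bounds by simp
  moreover have "lam_slow * (lam_slow - \<kappa>1 * g11) < 0" "lam_fast * (lam_fast - \<kappa>1 * g11) > 0"
    using eigenvalue_bounds by (auto simp: mult_pos_neg)
  moreover have "\<sigma> * (\<mu> * (\<kappa>2 * g12)) > 0" if "\<mu> > 0" for \<mu>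
    using that kappa_pos gram_A_pos by (simp add: algebra_simps)
  ultimately show "\<sigma> * gram A v1 slow_dir > 0" "gram A v2 slow_dir < 0"
    "\<sigma> * gram A v1 fast_vec > 0" "gram A v2 fast_vec > 0"
    using eigenvalue_bounds
    by (auto simp: slow_dir_def fast_vec_def gram_scaleR_right gram_eigvec divide_neg_pos)
qed

lemma cone_coordinate_identity:
  defines "\<alpha>1 \<equiv> \<sigma> * gram A v1 slow_dir" and "\<alpha>2 \<equiv> - gram A v2 slow_dir"
    and "\<beta>1 \<equiv> \<sigma> * gram A v1 fast_vec" and "\<beta>2 \<equiv> gram A v2 fast_vec"
  shows "\<beta>2 * (\<sigma> * gram A v1 h) - \<beta>1 * gram A v2 h
    = (\<alpha>1 * \<beta>2 + \<alpha>2 * \<beta>1) * (det2 h fast_vec / det2 slow_dir fast_vec)"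
proof -
  define c d where "c = det2 h fast_vec / det2 slow_dir fast_vec"
    and "d = det2 slow_dir h / det2 slow_dir fast_vec"
  have "h = c *\<^sub>R slow_dir + d *\<^sub>R fast_vec"
    unfolding c_def d_def by (rule det2_decomposition[OF det2_slow_fast])
  then have "gram A v1 h = c * gram A v1 slow_dir + d * gram A v1 fast_vec"
    and "gram A v2 h = c * gram A v2 slow_dir + d * gram A v2 fast_vec"
    by (metis gram_linear_right)+
  then show ?thesis
    by (simp add: c_def[symmetric] assms algebra_simps)
qed

lemma linearised_wedge_in_cone:
  obtains \<delta> K where "\<delta> > 0" "K > 0"
    "\<And>h. \<sigma> * gram A v1 h \<ge> - (\<delta> * norm h) \<Longrightarrow> gram A v2 h \<le> \<delta> * norm h \<Longrightarrow>
      norm h \<le> K * (det2 h fast_vec / det2 slow_dir fast_vec)"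
proof -
  define \<alpha>1 \<alpha>2 \<beta>1 \<beta>2 where "\<alpha>1 = \<sigma> * gram A v1 slow_dir" and "\<alpha>2 = - gram A v2 slow_dir"
    and "\<beta>1 = \<sigma> * gram A v1 fast_vec" and "\<beta>2 = gram A v2 fast_vec"
  have pos: "\<alpha>1 > 0" "\<alpha>2 > 0" "\<beta>1 > 0" "\<beta>2 > 0"
    unfolding \<alpha>1_def \<alpha>2_def \<beta>1_def \<beta>2_def using gram_eigvec_signs by linarith+
  define m where "m = min \<beta>1 \<beta>2"
  have "m > 0" "m \<le> \<beta>1" "m \<le> \<beta>2"
    using pos by (auto simp: m_def)
  obtain C where "C > 0" and C: "\<And>h. norm h \<le> C * (\<bar>gram A v1 h\<bar> + \<bar>gram A v2 h\<bar>)"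
    using norm_le_gram_coordinates by blast
  define \<delta> where "\<delta> = m / (2 * C * (2 * m + \<beta>1 + \<beta>2))"
  have "\<delta> > 0" "\<delta> * (2 * m + \<beta>1 + \<beta>2) \<le> m / (2 * C)"
    using \<open>m > 0\<close> \<open>C > 0\<close> pos by (simp_all add: \<delta>_def)
  have abs_sigma: "\<bar>\<sigma> * z\<bar> = \<bar>z\<bar>" for z
    using sigma_cases by auto
  have "norm h \<le> 2 * C * (\<alpha>1 * \<beta>2 + \<alpha>2 * \<beta>1) / m * (det2 h fast_vec / det2 slow_dir fast_vec)"
    if "\<sigma> * gram A v1 h \<ge> - (\<delta> * norm h)" "gram A v2 h \<le> \<delta> * norm h" for h
  proof -
    have "norm h \<le> C * (\<bar>\<sigma> * gram A v1 h\<bar> + \<bar>gram A v2 h\<bar>)"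
      using C[of h] by (simp add: abs_sigma)
    then have "m / (2 * C) * norm h \<le> \<beta>2 * (\<sigma> * gram A v1 h) - \<beta>1 * gram A v2 h"
      using that \<open>m > 0\<close> \<open>m \<le> \<beta>1\<close> \<open>m \<le> \<beta>2\<close> \<open>C > 0\<close> \<open>\<delta> > 0\<close>
        \<open>\<delta> * (2 * m + \<beta>1 + \<beta>2) \<le> m / (2 * C)\<close>
      by (intro cone_inequality) auto
    also have "\<dots> = (\<alpha>1 * \<beta>2 + \<alpha>2 * \<beta>1) * (det2 h fast_vec / det2 slow_dir fast_vec)"
      unfolding \<alpha>1_def \<alpha>2_def \<beta>1_def \<beta>2_def by (rule cone_coordinate_identity)
    finally have bound: "norm h * (m / (2 * C))
        \<le> (\<alpha>1 * \<beta>2 + \<alpha>2 * \<beta>1) * (det2 h fast_vec / det2 slow_dir fast_vec)"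
      by (simp only: mult.commute)
    have "m / (2 * C) > 0"
      using \<open>m > 0\<close> \<open>C > 0\<close> by simp
    from iffD2[OF pos_le_divide_eq[OF this] bound]
    have "norm h \<le> (\<alpha>1 * \<beta>2 + \<alpha>2 * \<beta>1) * (det2 h fast_vec / det2 slow_dir fast_vec)
        / (m / (2 * C))" .
    then show ?thesis
      by (simp add: algebra_simps)
  qed
  moreover have "2 * C * (\<alpha>1 * \<beta>2 + \<alpha>2 * \<beta>1) / m > 0"
    using pos \<open>m > 0\<close> \<open>C > 0\<close> by (intro divide_pos_pos mult_pos_pos add_pos_pos) simp_all
  ultimately show ?thesis
    using that \<open>\<delta> > 0\<close> by blast
qed

lemma sign_region_near_A_in_cone:
  obtains K r where "K > 0" "r > 0"
    "\<And>p. norm (p - A) < r \<Longrightarrow> \<sigma> * log_ratio1 p \<ge> 0 \<Longrightarrow> log_ratio2 p \<le> 0 \<Longrightarrow>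
      norm (p - A) \<le> K * (det2 (p - A) fast_vec / det2 slow_dir fast_vec)"
proof -
  obtain \<delta> K where "\<delta> > 0" "K > 0" and cone: "\<And>h. \<sigma> * gram A v1 h \<ge> - (\<delta> * norm h) \<Longrightarrow>
      gram A v2 h \<le> \<delta> * norm h \<Longrightarrow> norm h \<le> K * (det2 h fast_vec / det2 slow_dir fast_vec)"
    using linearised_wedge_in_cone by blast
  obtain r1 where "r1 > 0" and r1: "\<forall>p. norm (p - A) < r1 \<longrightarrow>
      norm (log_ratio1 p - log_ratio1 A - gram A v1 (p - A)) \<le> \<delta> * norm (p - A)"
    using log_ratio_has_derivative(1)[OF A_in_quadrant] \<open>\<delta> > 0\<close>
    unfolding has_derivative_at_alt by blast
  obtain r2 where "r2 > 0" and r2: "\<forall>p. norm (p - A) < r2 \<longrightarrow>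
      norm (log_ratio2 p - log_ratio2 A - gram A v2 (p - A)) \<le> \<delta> * norm (p - A)"
    using log_ratio_has_derivative(2)[OF A_in_quadrant] \<open>\<delta> > 0\<close>
    unfolding has_derivative_at_alt by blast
  have "norm (p - A) \<le> K * (det2 (p - A) fast_vec / det2 slow_dir fast_vec)"
    if "norm (p - A) < min r1 r2" "\<sigma> * log_ratio1 p \<ge> 0" "log_ratio2 p \<le> 0" for p
  proof (rule cone)
    have "\<bar>log_ratio1 p - gram A v1 (p - A)\<bar> \<le> \<delta> * norm (p - A)"
      using r1[rule_format, of p] that(1) log_ratio_A by simp
    then show "\<sigma> * gram A v1 (p - A) \<ge> - (\<delta> * norm (p - A))"
      using that(2) sigma_cases by (auto simp: abs_le_iff)
    have "\<bar>log_ratio2 p - gram A v2 (p - A)\<bar> \<le> \<delta> * norm (p - A)"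
      using r2[rule_format, of p] that(1) log_ratio_A by simp
    then show "gram A v2 (p - A) \<le> \<delta> * norm (p - A)"
      using that(3) by (simp add: abs_le_iff)
  qed
  then show ?thesis
    using that[of K "min r1 r2"] \<open>K > 0\<close> \<open>r1 > 0\<close> \<open>r2 > 0\<close> by simp
qed

end

section \<open>The trajectory starting at D\<close>

lemma ln_lower_bound_of_sum:
  fixes x y S m c :: real
  assumes "x > 0" "y > 0" "S > 0" "S \<le> x + y" "0 < m" "m < 1" "ln x \<le> m * ln y + c"
  shows "ln y \<ge> min 0 (ln (S / (exp c + 1)) / m)"
proof (cases "ln y < 0")
  case True
  then have "ln y \<le> m * ln y"
    using \<open>m < 1\<close> by (simp add: mult_less_cancel_right_disj less_eq_real_def)
  then have "y \<le> exp (m * ln y)"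
    using \<open>y > 0\<close> by (metis exp_le_cancel_iff exp_ln)
  moreover have "x \<le> exp c * exp (m * ln y)"
    using assms(1,7) by (metis exp_add exp_le_cancel_iff exp_ln add.commute)
  ultimately have "S \<le> (exp c + 1) * exp (m * ln y)"
    using \<open>S \<le> x + y\<close> by (simp add: algebra_simps)
  then have "S / (exp c + 1) \<le> exp (m * ln y)"
    by (simp add: pos_divide_le_eq add_pos_pos mult.commute)
  then have "ln (S / (exp c + 1)) \<le> ln (exp (m * ln y))"
    using \<open>S > 0\<close> by (subst ln_le_cancel_iff) (auto simp: add_pos_pos)
  then have "ln (S / (exp c + 1)) / m \<le> ln y"
    using \<open>m > 0\<close> by (simp add: divide_le_eq mult.commute)
  then show ?thesis
    by simp
qed simp

locale two_reaction_trajectory = two_reaction_system +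
  fixes D :: "real \<times> real" and X :: "real \<Rightarrow> real \<times> real"
  assumes eps_lt1: "\<epsilon> < 1"
    and D_pos: "fst D > 0" "snd D > 0"
    and D_eq1: "fst D powr (a1' - a1) * snd D powr (b1' - b1) = \<epsilon>^2"
    and D_eq2: "fst D powr (a2' - a2) * snd D powr (b2' - b2) = \<epsilon>^2"
    and X0: "X 0 = D"
    and X_pos: "\<And>t. t \<ge> 0 \<Longrightarrow> fst (X t) > 0 \<and> snd (X t) > 0"
    and X_ode: "\<And>t. t \<ge> 0 \<Longrightarrow> (X has_vector_derivative F (X t)) (at t within {0..})"
begin

lemma X_in_quadrant: "t \<ge> 0 \<Longrightarrow> X t \<in> positive_quadrant"
  using X_pos by (simp add: positive_quadrant_def)

lemma log_ratio_D: "log_ratio1 D = 0" "log_ratio2 D < 0"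
proof -
  have "D \<in> positive_quadrant"
    using D_pos by (simp add: positive_quadrant_def)
  then have "exp (log_ratio1 D) = exp 0" "exp (log_ratio2 D) = \<epsilon>^4"
    using exp_log_ratio D_eq1 D_eq2 eps_pos by (auto simp: power2_eq_square power4_eq_xxxx)
  moreover have "\<epsilon>^4 < exp 0"
    using eps_pos eps_lt1 by (simp add: power_less_one_iff)
  ultimately show "log_ratio1 D = 0" "log_ratio2 D < 0"
    by (metis exp_inj_iff, metis exp_less_cancel_iff)
qed

lemma X_ne_A: "t \<ge> 0 \<Longrightarrow> X t \<noteq> A"
  using trajectory_never_reaches_equilibrium[OF X_ode field_has_derivative field_A]
    X0 log_ratio_D log_ratio_A by force

lemma log_ratio_along_X:
  assumes "t \<ge> 0"
  shows "((\<lambda>t. log_ratio1 (X t)) has_real_derivative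
      rate1 (X t) * gram (X t) v1 v1 + rate2 (X t) * gram (X t) v1 v2) (at t within {0..})"
    and "((\<lambda>t. log_ratio2 (X t)) has_real_derivative
      rate1 (X t) * gram (X t) v1 v2 + rate2 (X t) * gram (X t) v2 v2) (at t within {0..})"
  using has_real_derivative_comp_vector[OF X_ode[OF assms]
      log_ratio_has_derivative(1)[OF X_in_quadrant[OF assms]]]
    has_real_derivative_comp_vector[OF X_ode[OF assms]
      log_ratio_has_derivative(2)[OF X_in_quadrant[OF assms]]]
  by (simp_all add: field_eq gram_linear_right gram_commute[of _ v2 v1])

text \<open>In logarithmic coordinates this region is a wedge with vertex \<open>A\<close>, and \<open>D\<close> lies on its
  boundary.  On the edges the field points inwards because \<open>\<sigma> gram p v1 v2 > 0\<close>.\<close>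

lemma sign_region_invariant:
  assumes "t \<ge> 0"
  shows "\<sigma> * log_ratio1 (X t) \<ge> 0 \<and> log_ratio2 (X t) \<le> 0"
proof -
  have sigma_rate: "\<sigma> * rate1 p < 0" if "p \<in> positive_quadrant" "\<sigma> * log_ratio1 p > 0" for p
    using sigma_cases rate_sign(1,2)[OF that(1)] that(2) by auto
  have lr_nonzero: "log_ratio1 (X t) \<noteq> 0 \<or> log_ratio2 (X t) \<noteq> 0" if "t \<ge> 0" for t
    using equilibrium_unique[OF X_in_quadrant[OF that]] X_ne_A[OF that] by blast
  have "\<sigma> * log_ratio1 (X t) \<ge> 0 \<and> - log_ratio2 (X t) \<ge> 0"
  proof (rule nonneg_pair_forward_invariant[OF
        DERIV_cmult[OF log_ratio_along_X(1), where c = \<sigma>] DERIV_minus[OF log_ratio_along_X(2)]])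
    show "\<sigma> * log_ratio1 (X 0) \<ge> 0" "- log_ratio2 (X 0) \<ge> 0"
      using log_ratio_D X0 by simp_all
  next
    fix t :: real
    assume t: "t \<ge> 0" "\<sigma> * log_ratio1 (X t) = 0" "- log_ratio2 (X t) \<ge> 0"
    then have "log_ratio1 (X t) = 0"
      using sigma_cases by auto
    then have "rate1 (X t) = 0" "rate2 (X t) > 0"
      using rate_sign[OF X_in_quadrant[OF t(1)]] lr_nonzero[OF t(1)] t(3) by auto
    then show "\<sigma> * (rate1 (X t) * gram (X t) v1 v1 + rate2 (X t) * gram (X t) v1 v2) > 0"
      using sigma_gram_pos[OF X_in_quadrant[OF t(1)]]
      by (simp add: mult.left_commute[of \<sigma>])
  next
    fix t :: real
    assume t: "t \<ge> 0" "- log_ratio2 (X t) = 0" "\<sigma> * log_ratio1 (X t) \<ge> 0"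
    then have "rate2 (X t) = 0" "\<sigma> * log_ratio1 (X t) > 0"
      using rate_sign(6)[OF X_in_quadrant[OF t(1)]] lr_nonzero[OF t(1)] sigma_cases by auto
    then have "- (rate1 (X t) * gram (X t) v1 v2 + rate2 (X t) * gram (X t) v2 v2)
        = - (\<sigma> * rate1 (X t)) * (\<sigma> * gram (X t) v1 v2)"
      using sigma_sq by (simp add: algebra_simps)
    also have "\<dots> > 0"
      using sigma_rate[OF X_in_quadrant[OF t(1)] \<open>\<sigma> * log_ratio1 (X t) > 0\<close>]
        sigma_gram_pos[OF X_in_quadrant[OF t(1)]] by (simp add: mult_neg_pos)
    finally show "- (rate1 (X t) * gram (X t) v1 v2 + rate2 (X t) * gram (X t) v2 v2) > 0" .
  qed (use assms in simp_all)
  then show ?thesis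
    by simp
qed

lemma sigma_rate_nonpos: "t \<ge> 0 \<Longrightarrow> \<sigma> * rate1 (X t) \<le> 0"
  using sign_region_invariant[of t] rate_sign(1,2)[OF X_in_quadrant[of t]] sigma_cases
  by (cases "rate1 (X t)" "0::real" rule: linorder_cases) auto

lemma rate2_nonneg: "t \<ge> 0 \<Longrightarrow> rate2 (X t) \<ge> 0"
  using sign_region_invariant[of t] rate_sign(3,4)[OF X_in_quadrant[of t]]
  by (cases "rate2 (X t) < 0") auto

definition "\<rho> = sgn (a2' - a2)"

lemma sgn_dx_eqs: "\<rho> * (a2' - a2) = \<bar>a2' - a2\<bar>" "a2' - a2 = \<rho> * \<bar>a2' - a2\<bar>"
  "\<sigma> * (a1' - a1) = \<rho> * \<bar>a1' - a1\<bar>" "\<rho> * (a1' - a1) = \<sigma> * \<bar>a1' - a1\<bar>"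
  unfolding \<rho>_def \<sigma>_def sgn_mult using dx_nonzero
  by (cases "a1' - a1 > 0"; cases "a2' - a2 > 0") (auto simp: sgn_if abs_if)

text \<open>In logarithmic coordinates the invariant wedge is bounded on one side; which side depends on
  the orientation \<open>\<rho>\<close> of \<open>v2\<close>, and so does the monotonicity of the total mass \<open>x + y\<close>.\<close>

definition "offset1 = 2 * \<sigma> * ln \<epsilon> / \<bar>a1' - a1\<bar>"
definition "offset2 = - 2 * ln \<epsilon> / \<bar>a2' - a2\<bar>"

lemma wedge_log_bounds:
  assumes "t \<ge> 0"
  defines "lx \<equiv> ln (fst (X t))" and "ly \<equiv> ln (snd (X t))"
  shows "\<rho> * (lx - m1 * ly) \<ge> offset1" and "\<rho> * (lx - m2 * ly) \<le> offset2"
proof -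
  have "\<sigma> * log_ratio1 (X t) = (\<sigma> * (a1' - a1)) * (lx - m1 * ly) - 2 * \<sigma> * ln \<epsilon>"
    by (simp add: log_ratio1_def lx_def ly_def dy_eq algebra_simps)
  then have L1: "\<sigma> * log_ratio1 (X t) = (\<rho> * (lx - m1 * ly)) * \<bar>a1' - a1\<bar> - 2 * \<sigma> * ln \<epsilon>"
    by (subst (asm) sgn_dx_eqs(3)) (simp only: mult_ac)
  have "log_ratio2 (X t) = (a2' - a2) * (lx - m2 * ly) + 2 * ln \<epsilon>"
    by (simp add: log_ratio2_def lx_def ly_def dy_eq algebra_simps)
  then have L2: "log_ratio2 (X t) = (\<rho> * (lx - m2 * ly)) * \<bar>a2' - a2\<bar> + 2 * ln \<epsilon>"
    by (subst (asm) sgn_dx_eqs(2)) (simp only: mult_ac)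
  have "\<bar>a1' - a1\<bar> > 0" "\<bar>a2' - a2\<bar> > 0"
    using dx_nonzero by simp_all
  then show "\<rho> * (lx - m1 * ly) \<ge> offset1" "\<rho> * (lx - m2 * ly) \<le> offset2"
    unfolding offset1_def offset2_def using L1 L2 sign_region_invariant[OF assms(1)]
    by (simp_all only: pos_divide_le_eq pos_le_divide_eq) linarith+
qed

lemma total_mass_monotone:
  assumes "t \<ge> 0"
  shows "\<rho> * (fst (X t) + snd (X t)) \<le> \<rho> * (fst D + snd D)"
proof -
  have "(\<lambda>t. \<rho> * (fst (X t) + snd (X t))) t \<le> (\<lambda>t. \<rho> * (fst (X t) + snd (X t))) 0"
  proof (rule DERIV_within_nonpos_imp_decreasing[where a = 0 and s = 0 and s' = t and
        g = "\<lambda>t. \<rho> * (fst (X t) + snd (X t))"])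
    fix s :: real assume "s \<ge> 0"
    have "((\<lambda>t. fst (X t) + snd (X t)) has_vector_derivative fst (F (X s)) + snd (F (X s)))
        (at s within {0..})"
      using bounded_linear.has_vector_derivative[OF _ X_ode[OF \<open>s \<ge> 0\<close>], of "\<lambda>p. fst p + snd p"]
      by (simp add: bounded_linear_add bounded_linear_fst bounded_linear_snd)
    then have "((\<lambda>t. \<rho> * (fst (X t) + snd (X t))) has_real_derivative
        \<rho> * (fst (F (X s)) + snd (F (X s)))) (at s within {0..})"
      by (intro DERIV_cmult) (simp add: has_real_derivative_iff_has_vector_derivative)
    moreover have "\<rho> * (fst (F (X s)) + snd (F (X s)))
        = (\<rho> * (a1' - a1)) * rate1 (X s) * (1 - m1) + (\<rho> * (a2' - a2)) * rate2 (X s) * (1 - m2)"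
      by (simp add: field_eq v1_def v2_def dy_eq algebra_simps)
    ultimately show "((\<lambda>t. \<rho> * (fst (X t) + snd (X t))) has_real_derivative
        (\<sigma> * rate1 (X s)) * (\<bar>a1' - a1\<bar> * (1 - m1)) + rate2 (X s) * (\<bar>a2' - a2\<bar> * (1 - m2)))
        (at s within {0..})"
      unfolding sgn_dx_eqs(1,4) by (simp only: mult_ac)
  next
    fix s :: real assume "0 \<le> s"
    then show "(\<sigma> * rate1 (X s)) * (\<bar>a1' - a1\<bar> * (1 - m1))
        + rate2 (X s) * (\<bar>a2' - a2\<bar> * (1 - m2)) \<le> 0"
      using mult_nonpos_nonneg[OF sigma_rate_nonpos[OF \<open>0 \<le> s\<close>], of "\<bar>a1' - a1\<bar> * (1 - m1)"]
        mult_nonneg_nonpos[OF rate2_nonneg[OF \<open>0 \<le> s\<close>], of "\<bar>a2' - a2\<bar> * (1 - m2)"] m_bounds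
      by (simp add: mult_nonpos_nonneg mult_nonneg_nonpos)
  qed (use assms in auto)
  then show ?thesis
    using X0 by simp
qed


lemma scaled_log_lower_bounds:
  assumes "t \<ge> 0"
  defines "Lw \<equiv> (offset1 - offset2) / (m2 - m1)"
  shows "\<rho> * ln (snd (X t)) \<ge> Lw" "\<rho> * ln (fst (X t)) \<ge> offset1 + m1 * Lw"
proof -
  have w: "\<rho> * (ln (fst (X t)) - m1 * ln (snd (X t))) \<ge> offset1"
    "\<rho> * (ln (fst (X t)) - m2 * ln (snd (X t))) \<le> offset2"
    using wedge_log_bounds[OF assms(1)] by simp_all
  then have "(m2 - m1) * (\<rho> * ln (snd (X t))) \<ge> offset1 - offset2"
    by (simp add: algebra_simps)
  then show "\<rho> * ln (snd (X t)) \<ge> Lw"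
    using m_bounds by (simp add: Lw_def pos_divide_le_eq mult.commute)
  then have "m1 * Lw \<le> m1 * (\<rho> * ln (snd (X t)))"
    using m_bounds by (intro mult_left_mono) auto
  with w show "\<rho> * ln (fst (X t)) \<ge> offset1 + m1 * Lw"
    by (simp add: algebra_simps)
qed

lemma trajectory_in_box:
  obtains lo hi where "lo > 0" "\<And>t. t \<ge> 0 \<Longrightarrow> X t \<in> {lo..hi} \<times> {lo..hi}"
proof -
  define S0 where "S0 = fst D + snd D"
  define Lw where "Lw = (offset1 - offset2) / (m2 - m1)"
  have exp_le: "exp a \<le> x" if "a \<le> ln x" "x > 0" for a x :: real
    using that by (metis exp_le_cancel_iff exp_ln)
  have le_exp: "x \<le> exp a" if "ln x \<le> a" "x > 0" for a x :: real
    using that by (metis exp_le_cancel_iff exp_ln)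
  have log_bounds: "\<rho> * ln (snd (X t)) \<ge> Lw" "\<rho> * ln (fst (X t)) \<ge> offset1 + m1 * Lw"
    if "t \<ge> 0" for t
    using scaled_log_lower_bounds[OF that] by (simp_all add: Lw_def)
  have "\<rho> = 1 \<or> \<rho> = -1"
    using dx_nonzero by (auto simp: \<rho>_def sgn_if)
  then show thesis
  proof
    assume "\<rho> = 1"
    show thesis
    proof (rule that[of "min (exp (offset1 + m1 * Lw)) (exp Lw)" S0])
      fix t :: real assume "t \<ge> 0"
      have "fst (X t) + snd (X t) \<le> S0"
        using total_mass_monotone[OF \<open>t \<ge> 0\<close>] \<open>\<rho> = 1\<close> by (simp add: S0_def)
      moreover have "exp (offset1 + m1 * Lw) \<le> fst (X t)" "exp Lw \<le> snd (X t)"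
        using log_bounds[OF \<open>t \<ge> 0\<close>] X_pos[OF \<open>t \<ge> 0\<close>] \<open>\<rho> = 1\<close> by (auto intro: exp_le)
      ultimately show "X t \<in> {min (exp (offset1 + m1 * Lw)) (exp Lw)..S0} \<times> {min (exp (offset1 + m1 * Lw)) (exp Lw)..S0}"
        using X_pos[OF \<open>t \<ge> 0\<close>] by (auto simp: mem_Times_iff)
    qed simp
  next
    assume "\<rho> = -1"
    define Ly where "Ly = min 0 (ln (S0 / (exp (- offset1) + 1)) / m1)"
    define lo where "lo = min (exp Ly) (exp (m2 * Ly - offset2))"
    define hi where "hi = max (exp (- (offset1 + m1 * Lw))) (exp (- Lw))"
    show thesis
    proof (rule that[of lo hi])
      fix t :: real assume "t \<ge> 0"
      define x y where "x = fst (X t)" and "y = snd (X t)"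
      have "x > 0" "y > 0"
        using X_pos[OF \<open>t \<ge> 0\<close>] by (simp_all add: x_def y_def)
      have w: "ln x \<le> m1 * ln y + - offset1" "ln x \<ge> m2 * ln y - offset2"
        using wedge_log_bounds[OF \<open>t \<ge> 0\<close>] \<open>\<rho> = -1\<close> by (simp_all add: x_def y_def)
      have "S0 \<le> x + y"
        using total_mass_monotone[OF \<open>t \<ge> 0\<close>] \<open>\<rho> = -1\<close> by (simp add: S0_def x_def y_def)
      then have "ln y \<ge> Ly"
        unfolding Ly_def using \<open>x > 0\<close> \<open>y > 0\<close> D_pos m_bounds w(1)
        by (intro ln_lower_bound_of_sum) (simp_all add: S0_def)
      moreover have "m2 * Ly \<le> m2 * ln y" if "Ly \<le> ln y"
        using that m_bounds by (intro mult_left_mono) auto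
      ultimately have "ln x \<ge> m2 * Ly - offset2"
        using w(2) by linarith
      then have "lo \<le> x" "lo \<le> y"
        using \<open>ln y \<ge> Ly\<close> \<open>x > 0\<close> \<open>y > 0\<close> by (auto simp: lo_def intro: exp_le min.coboundedI1 min.coboundedI2)
      moreover have "ln x \<le> - (offset1 + m1 * Lw)" "ln y \<le> - Lw"
        using log_bounds[OF \<open>t \<ge> 0\<close>] \<open>\<rho> = -1\<close> by (simp_all add: x_def y_def)
      then have "x \<le> hi" "y \<le> hi"
        using \<open>x > 0\<close> \<open>y > 0\<close> unfolding hi_def
        by (metis le_exp max.coboundedI1, metis le_exp max.coboundedI2)
      ultimately show "X t \<in> {lo..hi} \<times> {lo..hi}"
        by (simp add: mem_Times_iff x_def y_def)
    qed (simp add: lo_def)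
  qed
qed

lemma X_tendsto_A: "(X \<longlongrightarrow> A) at_top"
proof -
  obtain lo hi where "lo > 0" and box: "\<And>t. t \<ge> 0 \<Longrightarrow> X t \<in> {lo..hi} \<times> {lo..hi}"
    using trajectory_in_box by blast
  define K where "K = {lo..hi} \<times> {lo..hi}"
  have "K \<subseteq> positive_quadrant"
    using \<open>lo > 0\<close> by (auto simp: K_def positive_quadrant_def mem_Times_iff)
  show ?thesis
  proof (rule lyapunov_convergence[OF X_ode, where K = K and V = rel_entropy and W = dissipation])
    show "compact K"
      by (simp add: K_def compact_Times)
    show "continuous_on K F" "continuous_on K rel_entropy" "continuous_on K dissipation"
      using continuous_on_quadrant \<open>K \<subseteq> positive_quadrant\<close> by (auto intro: continuous_on_subset)
    fix t :: real assume "t \<ge> 0"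
    then show "X t \<in> K"
      using box by (simp add: K_def)
    obtain E' where "(rel_entropy has_derivative E') (at (X t))" "E' (F (X t)) = - dissipation (X t)"
      using rel_entropy_decreases_along_field[OF X_in_quadrant[OF \<open>t \<ge> 0\<close>]] by blast
    then show "((\<lambda>t. rel_entropy (X t)) has_real_derivative - dissipation (X t)) (at t within {0..})"
      using has_real_derivative_comp_vector[OF X_ode[OF \<open>t \<ge> 0\<close>]] by metis
  next
    fix p assume "p \<in> K"
    then have "p \<in> positive_quadrant"
      using \<open>K \<subseteq> positive_quadrant\<close> by blast
    then show "dissipation p \<ge> 0" "p \<noteq> A \<Longrightarrow> dissipation p > 0"
      by (rule dissipation_nonneg, rule dissipation_pos)
  qed
qed

lemma eventually_in_cone:
  obtains K where "K > 0"
    "eventually (\<lambda>t. norm (X t - A) \<le> K * (det2 (X t - A) fast_vec / det2 slow_dir fast_vec)) at_top"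
proof -
  obtain K r where "K > 0" "r > 0" and cone: "\<And>p. norm (p - A) < r \<Longrightarrow>
      \<sigma> * log_ratio1 p \<ge> 0 \<Longrightarrow> log_ratio2 p \<le> 0 \<Longrightarrow>
      norm (p - A) \<le> K * (det2 (p - A) fast_vec / det2 slow_dir fast_vec)"
    using sign_region_near_A_in_cone by blast
  have "eventually (\<lambda>t. dist (X t) A < r) at_top"
    using X_tendsto_A \<open>r > 0\<close> by (rule tendstoD)
  then have "eventually (\<lambda>t. norm (X t - A) \<le> K * (det2 (X t - A) fast_vec / det2 slow_dir fast_vec)) at_top"
    using eventually_ge_at_top[of 0]
    by eventually_elim (use cone sign_region_invariant in \<open>auto simp: dist_norm\<close>)
  with \<open>K > 0\<close> show thesis
    by (rule that)
qed

lemma direction_tendsto_slow_dir: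
  "((\<lambda>t. (1 / norm (X t - A)) *\<^sub>R (X t - A)) \<longlongrightarrow> slow_dir) at_top"
proof -
  obtain K where "K > 0"
    and cone: "eventually (\<lambda>t. norm (X t - A) \<le> K * (det2 (X t - A) fast_vec / det2 slow_dir fast_vec)) at_top"
    using eventually_in_cone by blast
  show ?thesis
  proof (rule direction_tendsto_dominant_eigenvector[where J = linear_part and w = fast_vec
        and R = "\<lambda>t. F (X t) - linear_part (X t - A)" and \<mu> = "- lam_slow" and \<nu> = "- lam_fast"])
    show "linear linear_part"
      by (rule has_derivative_linear[OF field_has_derivative])
    show "- lam_fast < - lam_slow"
      using eigenvalue_bounds by simp
  next
    fix t :: real assume "t \<ge> 0"
    then show "X t - A \<noteq> 0"
      using X_ne_A by simp
    show "((\<lambda>t. X t - A) has_vector_derivative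
        linear_part (X t - A) + (F (X t) - linear_part (X t - A))) (at t within {0..})"
      using X_ode[OF \<open>t \<ge> 0\<close>] by (auto intro!: derivative_eq_intros)
  next
    fix e :: real assume "e > 0"
    then obtain r where "r > 0" and r: "\<forall>p. norm (p - A) < r \<longrightarrow>
        norm (F p - F A - linear_part (p - A)) \<le> e * norm (p - A)"
      using field_has_derivative unfolding has_derivative_at_alt by blast
    have "eventually (\<lambda>t. dist (X t) A < r) at_top"
      using X_tendsto_A \<open>r > 0\<close> by (rule tendstoD)
    then show "eventually (\<lambda>t. norm (F (X t) - linear_part (X t - A)) \<le> e * norm (X t - A)) at_top"
    proof eventually_elim
      case (elim t)
      then have "norm (X t - A) < r"
        by (simp add: dist_norm)
      from r[rule_format, OF this] show ?case
        using field_A by simp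
    qed
  qed (use slow_dir_eigen fast_vec_eigen det2_slow_fast \<open>K > 0\<close> cone in auto)
qed

end

theorem proposition4p10:
  fixes a1 b1 a1' b1' a2 b2 a2' b2' \<epsilon> :: real
    and A D :: "real \<times> real"
    and X :: "real \<Rightarrow> real \<times> real"
    and J :: "real \<times> real \<Rightarrow> real \<times> real"
  assumes nonneg: "a1 \<ge> 0" "b1 \<ge> 0" "a1' \<ge> 0" "b1' \<ge> 0"
                  "a2 \<ge> 0" "b2 \<ge> 0" "a2' \<ge> 0" "b2' \<ge> 0"
    and slope1: "-1 < (b1' - b1) / (a1' - a1)" "(b1' - b1) / (a1' - a1) < 0"
    and slope2: "(b2' - b2) / (a2' - a2) < -1"
    and eps: "0 < \<epsilon>" "\<epsilon> < 1"
    and A_pos: "fst A > 0" "snd A > 0"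
    and A_eq1: "fst A powr (a1' - a1) * snd A powr (b1' - b1) = \<epsilon>^2"
    and A_eq2: "fst A powr (a2' - a2) * snd A powr (b2' - b2) = 1 / \<epsilon>^2"
    and D_pos: "fst D > 0" "snd D > 0"
    and D_eq1: "fst D powr (a1' - a1) * snd D powr (b1' - b1) = \<epsilon>^2"
    and D_eq2: "fst D powr (a2' - a2) * snd D powr (b2' - b2) = \<epsilon>^2"
    and X0: "X 0 = D"
    and X_pos: "\<And>t. t \<ge> 0 \<Longrightarrow> fst (X t) > 0 \<and> snd (X t) > 0"
    and X_ode: "\<And>t. t \<ge> 0 \<Longrightarrow>
       (X has_vector_derivative mass_action_field a1 b1 a1' b1' a2 b2 a2' b2' \<epsilon> (X t))
         (at t within {0..})"
    and Jac: "(mass_action_field a1 b1 a1' b1' a2 b2 a2' b2' \<epsilon> has_derivative J) (at A)"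
  shows "(X \<longlongrightarrow> A) at_top \<and>
    (\<exists>mu1 mu2 u w.
       mu1 \<noteq> mu2 \<and> \<bar>mu1\<bar> < \<bar>mu2\<bar> \<and>
       w \<noteq> 0 \<and> J w = mu2 *\<^sub>R w \<and>
       norm u = 1 \<and> J u = mu1 *\<^sub>R u \<and>
       ((\<lambda>t. (1 / norm (X t - A)) *\<^sub>R (X t - A)) \<longlongrightarrow> u) at_top)"
proof -
  interpret two_reaction_trajectory a1 b1 a1' b1' a2 b2 a2' b2' \<epsilon> A D X
    using slope1 slope2 eps A_pos A_eq1 A_eq2 D_pos D_eq1 D_eq2 X0 X_pos X_ode
    by unfold_locales auto
  have "J = linear_part"
    using has_derivative_unique[OF Jac field_has_derivative] .
  then show ?thesis
    using X_tendsto_A direction_tendsto_slow_dir slow_dir_eigen fast_vec_eigen eigenvalue_bounds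
    by (intro conjI exI[of _ "- lam_slow"] exI[of _ "- lam_fast"] exI[of _ slow_dir]
        exI[of _ fast_vec]) auto
qed

end
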